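(* Let $S$ be a finite semigroup, let $*:S\to S$ be an anti-involution of $S$, let $R$ be a commutative ring with $1$, and let $\alpha:S\times S\to R$ be a twisting. Assume: (A1) $\alpha(x,y)=\alpha(y^*,x^* )$ for all $x,y\in S$. (A2) For each $\mathcal D$-class $D$ of $S$ there is an idempotent $1_D\in D$ with $1_D^*=1_D$. Let $L_D$ be the $\mathcal L$-class of $1_D$, let $L_D^*=\{x^*\mid x\in L_D\}$ (this is the $\mathcal R$-class of $1_D$), and let $G_D=L_D\cap L_D^*$ (the $\mathcal H$-class of $1_D$, a group, mapped to itself by $*$). (A3) For each $\mathcal D$-class $D$ there is a map $\beta_D:L_D\times L_D^*\to G(R)$, where $G(R)$ is the group of units of $R$, such that $\beta_D(x,y)\beta_D(xy,z)=\beta_D(x,yz)\beta_D(y,z)$, $\alpha(x,y)\beta_D(xy,z)=\alpha(x,yz)\beta_D(y,z)$, and $\beta_D(x,y)=\beta_D(y^*,x^* )$, for all $x,y,z\in S$ for which every value of $\beta_D$ occurring in the respective identity has its arguments in $L_D\times L_D^*$. (A4) For each $\mathcal D$-class $D$, the twisted group algebra $R^{\beta_D}[G_D]$ (with twisting the restriction of $\beta_D$ to $G_D\times G_D$) is cellular with cell datum $(\Lambda_D,M_D,C,* )$, where $*$ here denotes the $R$-linear extension of $*|_{G_D}$ to $R^{\beta_D}[G_D]$. Write each cellular basis element of $R^{\beta_D}[G_D]$ as $C^\lambda_{st}=\sum_{g\in G_D}c^\lambda_{st}(g)\,g$ with $c^\lambda_{st}(g)\in R$. Let $\mathcal D$ denote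 the set of $\mathcal D$-classes of $S$ and, for $D\in\mathcal D$, let $\mathcal L_D$ be the set of $\mathcal L$-classes contained in $D$. Let $\Lambda=\{(D,\lambda)\mid D\in\mathcal D,\ \lambda\in\Lambda_D\}$, partially ordered by $(D_1,\lambda_1)\le(D_2,\lambda_2)$ iff $D_1<_{\mathcal D}D_2$, or $D_1=D_2$ and $\lambda_1\le\lambda_2$ in $\Lambda_{D_1}$. For $(D,\lambda)\in\Lambda$ let $M(D,\lambda)=\mathcal L_D\times M_D(\lambda)$. For each $L\in\mathcal L_D$ choose any $u_L\in L$ with $u_L\,\mathcal R\,1_D$, and for $(L,s),(K,t)\in M(D,\lambda)$ define \[C^{(D,\lambda)}_{(L,s)(K,t)}=\sum_{g\in G_D}c^\lambda_{st}(g)\,\beta_D(u_L^*,g)\,\beta_D(u_L^*g,u_K)\,(u_L^*gu_K)\in R^\alpha[S].\] Then $R^\alpha[S]$ is a cellular algebra with cell datum $(\Lambda,M,C,* )$, where $*$ is the $R$-linear extension of $*$ to $R^\alpha[S]$.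
   Context: Green's relations on a semigroup $S$ (with $S^1$ the monoid obtained by adjoining an identity): $x\le_{\mathcal R}y$ iff $x\in yS^1$; $x\le_{\mathcal L}y$ iff $x\in S^1y$; $x\le_{\mathcal J}y$ iff $x\in S^1yS^1$; $\mathcal R,\mathcal L,\mathcal J$ are the equivalences $\le\cap\ge$ of these preorders; $\mathcal H=\mathcal R\cap\mathcal L$; $\mathcal D$ is the equivalence relation generated by $\mathcal R\cup\mathcal L$. For finite $S$, $\mathcal D=\mathcal J$, so $\le_{\mathcal J}$ induces a partial order $\le_{\mathcal D}$ on the set of $\mathcal D$-classes; $D_1<_{\mathcal D}D_2$ means $D_1\le_{\mathcal D}D_2$ and $D_1\ne D_2$. An anti-involution of $S$ is a map $*:S\to S$ with $(x^* )^*=x$ and $(xy)^*=y^*x^*$. A twisting from $S$ into $R$ is a map $\alpha:S\times S\to R$ with $\alpha(x,y)\alpha(xy,z)=\alpha(x,yz)\alpha(y,z)$ for all $x,y,z$; the twisted semigroup algebra $R^\alpha[S]$ is the free $R$-module with basis $S$ and product $x\cdot y=\alpha(x,y)(xy)$ extended bilinearly (associative). By (A1), $*$ extends $R$-linearly to an anti-involution of $R^\alpha[S]$; similarly for $R^{\beta_D}[G_D]$. An anti-involution of an $R$-algebra $A$ is an $R$-linear map $*$ with $(a^* )^*=a$ and $(ab)^*=b^*a^*$. An $R$-algebra $A$ is cellular with cell datum $(\Lambda,M,C,* )$ if: (C1) $\Lambda$ is a finite poset, for each $\lambda\in\Lambda$ there is a finite set $M(\lambda)$ and elements $C^\lambda_{st}\in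 A$ ($s,t\in M(\lambda)$), and $\{C^\lambda_{st}\}$ is an $R$-basis of $A$; (C2) $*$ is an anti-involution of $A$ with $(C^\lambda_{st})^*=C^\lambda_{ts}$; (C3) for all $\lambda$, $s\in M(\lambda)$, $a\in A$ there exist $r_a(s',s)\in R$ ($s'\in M(\lambda)$) such that for every $t\in M(\lambda)$, $aC^\lambda_{st}\in\sum_{s'}r_a(s',s)C^\lambda_{s't}+A(<\lambda)$, where $A(<\lambda)$ is the $R$-span of all $C^\mu_{s''t''}$ with $\mu<\lambda$. *)

theory Defs
  imports Main
begin

definition leR :: "'a::semigroup_mult \<Rightarrow> 'a \<Rightarrow> bool" where
  "leR x y \<longleftrightarrow> x = y \<or> (\<exists>s. x = y * s)"
definition leL :: "'a::semigroup_mult \<Rightarrow> 'a \<Rightarrow> bool" where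
  "leL x y \<longleftrightarrow> x = y \<or> (\<exists>s. x = s * y)"
definition leJ :: "'a::semigroup_mult \<Rightarrow> 'a \<Rightarrow> bool" where
  "leJ x y \<longleftrightarrow> x = y \<or> (\<exists>s. x = s * y) \<or> (\<exists>s. x = y * s) \<or> (\<exists>s t. x = s * y * t)"

definition greenR :: "'a::semigroup_mult \<Rightarrow> 'a \<Rightarrow> bool" where
  "greenR x y \<longleftrightarrow> leR x y \<and> leR y x"
definition greenL :: "'a::semigroup_mult \<Rightarrow> 'a \<Rightarrow> bool" where
  "greenL x y \<longleftrightarrow> leL x y \<and> leL y x"
definition greenH :: "'a::semigroup_mult \<Rightarrow> 'a \<Rightarrow> bool" where
  "greenH x y \<longleftrightarrow> greenR x y \<and> greenL x y"
definition greenD :: "'a::semigroup_mult \<Rightarrow> 'a \<Rightarrow> bool" where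
  "greenD = (\<lambda>x y. greenR x y \<or> greenL x y)\<^sup>*\<^sup>*"

definition Dclasses :: "'a::semigroup_mult set set" where
  "Dclasses = range (\<lambda>x. {y. greenD x y})"

definition Lclasses :: "'a::semigroup_mult set \<Rightarrow> 'a set set" where
  "Lclasses D = (\<lambda>x. {y. greenL x y}) ` D"

text \<open>Order on D-classes induced by the J-preorder (D = J for finite semigroups).\<close>
definition leDcl :: "'a::semigroup_mult set \<Rightarrow> 'a set \<Rightarrow> bool" where
  "leDcl D1 D2 \<longleftrightarrow> (\<exists>x\<in>D1. \<exists>y\<in>D2. leJ x y)"
definition lessDcl :: "'a::semigroup_mult set \<Rightarrow> 'a set \<Rightarrow> bool" where
  "lessDcl D1 D2 \<longleftrightarrow> leDcl D1 D2 \<and> D1 \<noteq> D2"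

definition anti_involution :: "('a::semigroup_mult \<Rightarrow> 'a) \<Rightarrow> bool" where
  "anti_involution st \<longleftrightarrow> (\<forall>x. st (st x) = x) \<and> (\<forall>x y. st (x * y) = st y * st x)"

definition twisting :: "('a::semigroup_mult \<Rightarrow> 'a \<Rightarrow> 'r::comm_ring_1) \<Rightarrow> bool" where
  "twisting \<alpha> \<longleftrightarrow> (\<forall>x y z. \<alpha> x y * \<alpha> (x * y) z = \<alpha> x (y * z) * \<alpha> y z)"

text \<open>L_D (L-class of 1_D) and G_D = L_D inter L_D^*, given the choice 1_D = one D.\<close>
definition LD :: "('a::semigroup_mult set \<Rightarrow> 'a) \<Rightarrow> 'a set \<Rightarrow> 'a set" where
  "LD one D = {y. greenL (one D) y}"
definition GD :: "('a::semigroup_mult \<Rightarrow> 'a) \<Rightarrow> ('a set \<Rightarrow> 'a) \<Rightarrow> 'a set \<Rightarrow> 'a set" where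
  "GD st one D = LD one D \<inter> st ` LD one D"

section \<open>Twisted algebra R^gamma[T] on a finite subset T: elements are coefficient
  functions vanishing outside T\<close>

definition tvec :: "'a set \<Rightarrow> ('a \<Rightarrow> 'r::comm_ring_1) set" where
  "tvec T = {f. \<forall>z. z \<notin> T \<longrightarrow> f z = 0}"

definition tmult :: "('a::semigroup_mult \<Rightarrow> 'a \<Rightarrow> 'r::comm_ring_1) \<Rightarrow> 'a set
    \<Rightarrow> ('a \<Rightarrow> 'r) \<Rightarrow> ('a \<Rightarrow> 'r) \<Rightarrow> ('a \<Rightarrow> 'r)" where
  "tmult \<gamma> T f h = (\<lambda>z. \<Sum>x\<in>T. \<Sum>y\<in>T. if x * y = z then \<gamma> x y * f x * h y else 0)"

text \<open>R-linear extension of sigma: sum f(x) x |-> sum f(x) sigma(x).\<close>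
definition tstar :: "('a \<Rightarrow> 'a) \<Rightarrow> 'a set \<Rightarrow> ('a \<Rightarrow> 'r::comm_ring_1) \<Rightarrow> ('a \<Rightarrow> 'r)" where
  "tstar \<sigma> T f = (\<lambda>z. if z \<in> T then f (\<sigma> z) else 0)"

definition alg_anti_involution ::
  "('a::semigroup_mult \<Rightarrow> 'a \<Rightarrow> 'r::comm_ring_1) \<Rightarrow> 'a set \<Rightarrow> ('a \<Rightarrow> 'a) \<Rightarrow> bool" where
  "alg_anti_involution \<gamma> T \<sigma> \<longleftrightarrow>
     (\<forall>c::'r. \<forall>f\<in>tvec T. \<forall>h\<in>tvec T.
        tstar \<sigma> T (\<lambda>z. c * f z + h z) = (\<lambda>z. c * tstar \<sigma> T f z + tstar \<sigma> T h z)) \<and>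
     (\<forall>f::'a \<Rightarrow> 'r. f \<in> tvec T \<longrightarrow> tstar \<sigma> T (tstar \<sigma> T f) = f) \<and>
     (\<forall>f\<in>tvec T. \<forall>h\<in>tvec T.
        tstar \<sigma> T (tmult \<gamma> T f h) = tmult \<gamma> T (tstar \<sigma> T h) (tstar \<sigma> T f))"

definition partial_order_on_set :: "'l set \<Rightarrow> ('l \<Rightarrow> 'l \<Rightarrow> bool) \<Rightarrow> bool" where
  "partial_order_on_set \<Lambda> le \<longleftrightarrow>
     (\<forall>x\<in>\<Lambda>. le x x) \<and>
     (\<forall>x\<in>\<Lambda>. \<forall>y\<in>\<Lambda>. le x y \<and> le y x \<longrightarrow> x = y) \<and>
     (\<forall>x\<in>\<Lambda>. \<forall>y\<in>\<Lambda>. \<forall>z\<in>\<Lambda>. le x y \<and> le y z \<longrightarrow> le x z)"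

definition cell_idx :: "'l set \<Rightarrow> ('l \<Rightarrow> 'm set) \<Rightarrow> ('l \<times> 'm \<times> 'm) set" where
  "cell_idx \<Lambda> M = Sigma \<Lambda> (\<lambda>l. M l \<times> M l)"

definition cspan :: "('l \<Rightarrow> 'm \<Rightarrow> 'm \<Rightarrow> ('a \<Rightarrow> 'r::comm_ring_1)) \<Rightarrow> ('l \<times> 'm \<times> 'm) set
    \<Rightarrow> ('a \<Rightarrow> 'r) set" where
  "cspan C J = {f. \<exists>c. f = (\<lambda>z. \<Sum>(l,s,t)\<in>J. c (l,s,t) * C l s t z)}"

definition cellular ::
  "'a set \<Rightarrow> ('a::semigroup_mult \<Rightarrow> 'a \<Rightarrow> 'r::comm_ring_1) \<Rightarrow> ('a \<Rightarrow> 'a) \<Rightarrow>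
   'l set \<Rightarrow> ('l \<Rightarrow> 'l \<Rightarrow> bool) \<Rightarrow> ('l \<Rightarrow> 'm set) \<Rightarrow> ('l \<Rightarrow> 'm \<Rightarrow> 'm \<Rightarrow> ('a \<Rightarrow> 'r)) \<Rightarrow> bool" where
  "cellular T \<gamma> \<sigma> \<Lambda> le M C \<longleftrightarrow>
     \<comment> \<open>(C1)\<close>
     finite \<Lambda> \<and> partial_order_on_set \<Lambda> le \<and> (\<forall>l\<in>\<Lambda>. finite (M l)) \<and>
     (\<forall>l\<in>\<Lambda>. \<forall>s\<in>M l. \<forall>t\<in>M l. C l s t \<in> tvec T) \<and>
     (\<forall>f\<in>tvec T. \<exists>!c. (\<forall>i. i \<notin> cell_idx \<Lambda> M \<longrightarrow> c i = 0) \<and>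
         f = (\<lambda>z. \<Sum>(l,s,t)\<in>cell_idx \<Lambda> M. c (l,s,t) * C l s t z)) \<and>
     \<comment> \<open>(C2)\<close>
     alg_anti_involution \<gamma> T \<sigma> \<and>
     (\<forall>l\<in>\<Lambda>. \<forall>s\<in>M l. \<forall>t\<in>M l. tstar \<sigma> T (C l s t) = C l t s) \<and>
     \<comment> \<open>(C3)\<close>
     (\<forall>l\<in>\<Lambda>. \<forall>s\<in>M l. \<forall>a\<in>tvec T. \<exists>r. \<forall>t\<in>M l.
        (\<lambda>z. tmult \<gamma> T a (C l s t) z - (\<Sum>s'\<in>M l. r s' * C l s' t z))
          \<in> cspan C {(m, s'', t''). (m, s'', t'') \<in> cell_idx \<Lambda> M \<and> le m l \<and> m \<noteq> l})"

end

theory Submission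
  imports Defs
begin

text \<open>
  Every D-class D of the finite semigroup S carries coordinates: by Green's lemma,
  (L, g, K) \<mapsto> u_L^* g u_K is a bijection from \<L>_D \<times> G_D \<times> \<L>_D onto D.  Rescaled by the
  units \<beta>_D(u_L^*, g) \<beta>_D(u_L^* g, u_K), each (L, K)-block of R^\<alpha>[S] becomes a copy of
  R^\<beta>_D[G_D], so the cellular bases of the algebras R^\<beta>_D[G_D], transported block by block,
  form a basis of R^\<alpha>[S]; (A1) and the symmetry of \<beta>_D make it compatible with *.
  For (C3) it suffices to multiply by a single x \<in> S.  If x u_L^* \<notin> L_D, stability of finite
  semigroups puts x u_L^* g u_K into a strictly lower D-class.  Otherwise x u_L^* = u_L'^* h with
  h \<in> G_D, and the cocycle and compatibility identities of (A3) turn left multiplication by x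
  into left multiplication by h inside the (L', K)-block, where (C3) for R^\<beta>_D[G_D] applies.
\<close>

section \<open>Green's relations in finite semigroups\<close>

text \<open>Multiplication by elements of S^1, represented as 'a option with None the adjoined identity.\<close>

fun lmult1 :: "'a::semigroup_mult option \<Rightarrow> 'a \<Rightarrow> 'a" where
  "lmult1 None x = x"
| "lmult1 (Some a) x = a * x"

fun rmult1 :: "'a::semigroup_mult \<Rightarrow> 'a option \<Rightarrow> 'a" where
  "rmult1 x None = x"
| "rmult1 x (Some a) = x * a"

fun mult1 :: "'a::semigroup_mult option \<Rightarrow> 'a option \<Rightarrow> 'a option" where
  "mult1 None q = q"
| "mult1 p None = p"
| "mult1 (Some a) (Some b) = Some (a * b)"

lemma mult1_eq_None_iff: "mult1 p q = None \<longleftrightarrow> p = None \<and> q = None"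
  by (cases p; cases q) simp_all

lemma lmult1_lmult1: "lmult1 p (lmult1 q x) = lmult1 (mult1 p q) x"
  by (cases p; cases q) (simp_all add: mult.assoc)

lemma rmult1_rmult1: "rmult1 (rmult1 x p) q = rmult1 x (mult1 p q)"
  by (cases p; cases q) (simp_all add: mult.assoc)

lemma lmult1_rmult1: "lmult1 p (rmult1 x q) = rmult1 (lmult1 p x) q"
  by (cases p; cases q) (simp_all add: mult.assoc)

lemma lmult1_mult: "lmult1 p (x * y) = lmult1 p x * y"
  by (cases p) (simp_all add: mult.assoc)

lemma rmult1_mult: "rmult1 (x * y) q = x * rmult1 y q"
  by (cases q) (simp_all add: mult.assoc)

lemma leL_iff_lmult1: "leL x y \<longleftrightarrow> (\<exists>p. x = lmult1 p y)"
  unfolding leL_def by (metis lmult1.simps not_Some_eq)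

lemma leR_iff_rmult1: "leR x y \<longleftrightarrow> (\<exists>q. x = rmult1 y q)"
  unfolding leR_def by (metis rmult1.simps not_Some_eq)

lemma leJ_iff_lmult1_rmult1: "leJ x y \<longleftrightarrow> (\<exists>p q. x = lmult1 p (rmult1 y q))"
  unfolding leJ_def by (metis lmult1.simps rmult1.simps not_Some_eq mult.assoc)

lemma leL_refl [simp]: "leL x x" and leR_refl [simp]: "leR x x" and leJ_refl [simp]: "leJ x x"
  by (simp_all add: leL_def leR_def leJ_def)

lemma leL_trans: "leL x y \<Longrightarrow> leL y z \<Longrightarrow> leL x z"
  unfolding leL_iff_lmult1 by (metis lmult1_lmult1)

lemma leR_trans: "leR x y \<Longrightarrow> leR y z \<Longrightarrow> leR x z"
  unfolding leR_iff_rmult1 by (metis rmult1_rmult1)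

lemma leJ_trans: "leJ x y \<Longrightarrow> leJ y z \<Longrightarrow> leJ x z"
  unfolding leJ_iff_lmult1_rmult1 by (metis lmult1_lmult1 lmult1_rmult1 rmult1_rmult1)

lemma leL_imp_leJ: "leL x y \<Longrightarrow> leJ x y"
  unfolding leL_def leJ_def by blast

lemma leR_imp_leJ: "leR x y \<Longrightarrow> leJ x y"
  unfolding leR_def leJ_def by blast

lemma leJ_mult_left: "leJ (x * y) x"
  unfolding leJ_def by blast

lemma greenL_refl [simp]: "greenL x x"
  by (simp add: greenL_def)

lemma greenL_sym: "greenL x y \<Longrightarrow> greenL y x"
  by (simp add: greenL_def)

lemma greenL_trans: "greenL x y \<Longrightarrow> greenL y z \<Longrightarrow> greenL x z"
  by (meson greenL_def leL_trans)

lemma greenR_refl [simp]: "greenR x x"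
  by (simp add: greenR_def)

lemma greenR_sym: "greenR x y \<Longrightarrow> greenR y x"
  by (simp add: greenR_def)

lemma greenR_trans: "greenR x y \<Longrightarrow> greenR y z \<Longrightarrow> greenR x z"
  by (meson greenR_def leR_trans)

lemma greenL_greenR_commute:
  assumes "greenL a b" "greenR b c"
  obtains d where "greenR a d" "greenL d c"
proof -
  obtain p p' where a: "a = lmult1 p b" and b: "b = lmult1 p' a"
    using assms(1) unfolding greenL_def leL_iff_lmult1 by blast
  obtain q q' where c: "c = rmult1 b q" and b': "b = rmult1 c q'"
    using assms(2) unfolding greenR_def leR_iff_rmult1 by blast
  have "greenR a (rmult1 a q)"
    unfolding greenR_def leR_iff_rmult1 using a b' c by (metis lmult1_rmult1)
  moreover have "greenL (rmult1 a q) c"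
    unfolding greenL_def leL_iff_lmult1 using a b c by (metis lmult1_rmult1)
  ultimately show thesis by (rule that)
qed

lemma greenD_refl [simp]: "greenD x x"
  by (simp add: greenD_def)

lemma greenD_sym: "greenD x y \<Longrightarrow> greenD y x"
  unfolding greenD_def
proof (induction rule: rtranclp_induct)
  case (step y z)
  then have "greenR z y \<or> greenL z y"
    using greenL_sym greenR_sym by blast
  then show ?case
    using step.IH by (rule converse_rtranclp_into_rtranclp)
qed simp

lemma greenD_trans: "greenD x y \<Longrightarrow> greenD y z \<Longrightarrow> greenD x z"
  unfolding greenD_def by simp

lemma greenR_imp_greenD: "greenR x y \<Longrightarrow> greenD x y"
  unfolding greenD_def by auto

lemma greenL_imp_greenD: "greenL x y \<Longrightarrow> greenD x y"
  unfolding greenD_def by auto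

lemma greenD_imp_leJ: "greenD x y \<Longrightarrow> leJ x y"
  unfolding greenD_def
proof (induction rule: rtranclp_induct)
  case (step y z)
  then show ?case
    by (meson greenL_def greenR_def leJ_trans leL_imp_leJ leR_imp_leJ)
qed simp

lemma greenD_obtain_greenR_greenL:
  assumes "greenD x y"
  obtains z where "greenR x z" "greenL z y"
  using assms unfolding greenD_def
proof (induction arbitrary: thesis rule: rtranclp_induct)
  case (step y z)
  obtain w where w: "greenR x w" "greenL w y"
    using step.IH by blast
  from step.hyps(2) show ?case
  proof
    assume "greenR y z"
    then obtain d where "greenR w d" "greenL d z"
      using greenL_greenR_commute[OF w(2)] by blast
    then show ?thesis using step.prems w greenR_trans by blast
  next
    assume "greenL y z"
    then show ?thesis using step.prems w greenL_trans by blast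
  qed
qed (use greenL_refl greenR_refl in blast)

lemma leL_idempotent_iff: "e * e = e \<Longrightarrow> leL y e \<longleftrightarrow> y * e = y"
  unfolding leL_def by (metis mult.assoc)

lemma leR_idempotent_iff: "e * e = e \<Longrightarrow> leR y e \<longleftrightarrow> e * y = y"
  unfolding leR_def by (metis mult.assoc)

lemma idempotent_leL_iff: "e * e = e \<Longrightarrow> leL e y \<longleftrightarrow> (\<exists>t. t * y = e)"
  unfolding leL_def by metis

lemma idempotent_leR_iff: "e * e = e \<Longrightarrow> leR e y \<longleftrightarrow> (\<exists>t. y * t = e)"
  unfolding leR_def by metis

fun spow :: "'a::semigroup_mult \<Rightarrow> nat \<Rightarrow> 'a" where
  "spow a 0 = a"
| "spow a (Suc n) = spow a n * a"

lemma spow_commute: "a * spow a n = spow a n * a"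
proof (induction n)
  case (Suc n)
  then show ?case by (metis spow.simps(2) mult.assoc)
qed simp

lemma spow_add: "spow a m * spow a n = spow a (m + n + 1)"
  by (induction n) (simp_all flip: mult.assoc)

lemma spow_periodic:
  assumes period: "spow a i = spow a (i + p)" and n: "i \<le> n"
  shows "spow a (n + k * p) = spow a n"
proof -
  have shift: "spow a (m + p) = spow a m" if "i \<le> m" for m
  proof (cases "m = i")
    case False
    define k where "k = m - i - 1"
    have mk: "m = i + k + 1" "m + p = (i + p) + k + 1"
      using that False by (auto simp: k_def)
    have "spow a (m + p) = spow a (i + p) * spow a k"
      by (simp only: mk(2) spow_add)
    also have "\<dots> = spow a m"
      by (simp only: mk(1) period[symmetric] spow_add)
    finally show ?thesis .
  qed (use period in simp)
  show ?thesis
  proof (induction k)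
    case (Suc k)
    have "spow a (n + Suc k * p) = spow a (n + k * p + p)"
      by (simp add: algebra_simps)
    also have "\<dots> = spow a (n + k * p)"
      using n by (intro shift) simp
    finally show ?case using Suc by simp
  qed simp
qed

lemma spow_idempotent:
  fixes a :: "'a::{semigroup_mult, finite}"
  obtains m where "spow a m * spow a m = spow a m"
proof -
  have "\<not> inj (spow a)"
    using finite_imageD[of "spow a" UNIV] by (metis finite infinite_UNIV_nat)
  then obtain i p where period: "spow a i = spow a (i + p)" and "0 < p"
    unfolding inj_def by (metis less_imp_add_positive linorder_neqE_nat)
  define m where "m = (i + 1) * p - 1"
  have "(i + 1) * 1 \<le> (i + 1) * p"
    using \<open>0 < p\<close> by (intro mult_le_mono2) simp
  then have m: "m + m + 1 = m + (i + 1) * p" "i \<le> m"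
    by (auto simp: m_def)
  have "spow a m * spow a m = spow a (m + (i + 1) * p)"
    by (simp only: spow_add m(1))
  also have "\<dots> = spow a m"
    by (rule spow_periodic[OF period m(2)])
  finally show thesis by (rule that)
qed

text \<open>Iterating y = a y q shows that y is fixed by an idempotent power of a.\<close>

lemma absorb_left:
  fixes y :: "'a::{semigroup_mult, finite}"
  assumes y: "y = a * rmult1 y q"
  obtains p where "y = lmult1 p (a * y)"
proof -
  obtain m where idem: "spow a m * spow a m = spow a m"
    by (rule spow_idempotent)
  have iter: "y = spow a n * rmult1 y (map_option (\<lambda>b. spow b n) q)" for n
  proof (induction n)
    case 0
    show ?case using y by (simp add: option.map_ident)
  next
    case (Suc n)
    let ?Q = "map_option (\<lambda>b. spow b n) q"
    have "rmult1 y ?Q = rmult1 (a * rmult1 y q) ?Q"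
      using arg_cong[where f="\<lambda>t. rmult1 t ?Q", OF y] .
    also have "\<dots> = a * rmult1 y (mult1 q ?Q)"
      by (simp add: rmult1_mult rmult1_rmult1)
    also have "mult1 q ?Q = map_option (\<lambda>b. spow b (Suc n)) q"
      by (cases q) (simp_all add: spow_commute)
    finally show ?case
      using Suc.IH by (metis mult.assoc spow.simps(2))
  qed
  have "spow a m * y = y"
    using iter[of m] idem by (metis mult.assoc)
  show thesis
  proof (cases m)
    case 0
    then show thesis
      using that[of None] \<open>spow a m * y = y\<close> by simp
  next
    case (Suc k)
    then show thesis
      using that[of "Some (spow a k)"] \<open>spow a m * y = y\<close> by (simp add: mult.assoc)
  qed
qed

lemma absorb_right:
  fixes y :: "'a::{semigroup_mult, finite}"
  assumes y: "y = lmult1 p y * a"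
  obtains q where "y = rmult1 (y * a) q"
proof -
  obtain m where idem: "spow a m * spow a m = spow a m"
    by (rule spow_idempotent)
  have iter: "y = lmult1 (map_option (\<lambda>b. spow b n) p) y * spow a n" for n
  proof (induction n)
    case 0
    show ?case using y by (simp add: option.map_ident)
  next
    case (Suc n)
    let ?P = "map_option (\<lambda>b. spow b n) p"
    have "lmult1 ?P y = lmult1 ?P (lmult1 p y * a)"
      using arg_cong[where f="lmult1 ?P", OF y] .
    also have "\<dots> = lmult1 (mult1 ?P p) y * a"
      by (simp add: lmult1_mult lmult1_lmult1)
    also have "mult1 ?P p = map_option (\<lambda>b. spow b (Suc n)) p"
      by (cases p) simp_all
    finally show ?case
      using Suc.IH by (metis mult.assoc spow.simps(2) spow_commute)
  qed
  have "y * spow a m = y"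
    using iter[of m] idem by (metis mult.assoc)
  show thesis
  proof (cases m)
    case 0
    then show thesis
      using that[of None] \<open>y * spow a m = y\<close> by simp
  next
    case (Suc k)
    then show thesis
      using that[of "Some (spow a k)"] \<open>y * spow a m = y\<close> by (simp add: spow_commute mult.assoc)
  qed
qed

lemma leL_stable:
  fixes x y :: "'a::{semigroup_mult, finite}"
  assumes "leL x y" "leJ y x"
  shows "leL y x"
proof -
  obtain s where x: "x = lmult1 s y"
    using assms(1) leL_iff_lmult1 by blast
  obtain p q where "y = lmult1 p (rmult1 x q)"
    using assms(2) leJ_iff_lmult1_rmult1 by blast
  then have y: "y = lmult1 (mult1 p s) (rmult1 y q)"
    by (simp add: x lmult1_rmult1 lmult1_lmult1)
  show ?thesis
  proof (cases "mult1 p s")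
    case None
    then show ?thesis using x by (simp add: mult1_eq_None_iff)
  next
    case (Some a)
    have ay: "a * y = lmult1 p x"
      using Some by (simp add: x lmult1_lmult1)
    obtain c where "y = lmult1 c (a * y)"
      using absorb_left y Some by (metis lmult1.simps(2))
    then show ?thesis
      unfolding leL_iff_lmult1 ay lmult1_lmult1 by blast
  qed
qed

lemma leR_stable:
  fixes x y :: "'a::{semigroup_mult, finite}"
  assumes "leR x y" "leJ y x"
  shows "leR y x"
proof -
  obtain s where x: "x = rmult1 y s"
    using assms(1) leR_iff_rmult1 by blast
  obtain p q where "y = lmult1 p (rmult1 x q)"
    using assms(2) leJ_iff_lmult1_rmult1 by blast
  then have y: "y = rmult1 (lmult1 p y) (mult1 s q)"
    by (simp add: x lmult1_rmult1 rmult1_rmult1)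
  show ?thesis
  proof (cases "mult1 s q")
    case None
    then show ?thesis using x by (simp add: mult1_eq_None_iff)
  next
    case (Some a)
    have ya: "y * a = rmult1 x q"
      using Some by (simp add: x rmult1_rmult1)
    obtain c where "y = rmult1 (y * a) c"
      using absorb_right y Some by (metis rmult1.simps(2))
    then show ?thesis
      unfolding leR_iff_rmult1 ya rmult1_rmult1 by blast
  qed
qed

lemma greenD_if_leJ_leJ:
  fixes x y :: "'a::{semigroup_mult, finite}"
  assumes "leJ x y" "leJ y x"
  shows "greenD x y"
proof -
  obtain p q where x: "x = lmult1 p (rmult1 y q)"
    using assms(1) leJ_iff_lmult1_rmult1 by blast
  define z where "z = rmult1 y q"
  have "leR z y" "leL x z"
    unfolding z_def x leR_iff_rmult1 leL_iff_lmult1 by blast+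
  have "leR y z"
    using leR_stable \<open>leR z y\<close> leJ_trans[OF assms(2) leL_imp_leJ[OF \<open>leL x z\<close>]] .
  moreover have "leL z x"
    using leL_stable \<open>leL x z\<close> leJ_trans[OF leR_imp_leJ[OF \<open>leR z y\<close>] assms(2)] .
  ultimately have "greenL x z" "greenR z y"
    using \<open>leR z y\<close> \<open>leL x z\<close> unfolding greenL_def greenR_def by blast+
  then show ?thesis
    using greenD_trans greenL_imp_greenD greenR_imp_greenD by blast
qed

lemma Dclass_eq:
  assumes "D \<in> Dclasses" "x \<in> D"
  shows "D = {y. greenD x y}"
proof -
  obtain x0 where "D = {y. greenD x0 y}"
    using assms(1) unfolding Dclasses_def by blast
  then show ?thesis
    using assms(2) greenD_sym greenD_trans by blast
qed

lemma Dclass_in_Dclasses: "{y. greenD x y} \<in> Dclasses"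
  unfolding Dclasses_def by blast

lemma mem_Dclass_iff: "D \<in> Dclasses \<Longrightarrow> x \<in> D \<Longrightarrow> y \<in> D \<longleftrightarrow> greenD x y"
  using Dclass_eq by blast

lemma Dclasses_disjoint: "D \<in> Dclasses \<Longrightarrow> D' \<in> Dclasses \<Longrightarrow> x \<in> D \<Longrightarrow> x \<in> D' \<Longrightarrow> D = D'"
  using Dclass_eq by metis

lemma Lclass_eq:
  assumes "L \<in> Lclasses D" "x \<in> L"
  shows "L = {y. greenL x y}"
proof -
  obtain x0 where "L = {y. greenL x0 y}"
    using assms(1) unfolding Lclasses_def by blast
  then show ?thesis
    using assms(2) greenL_sym greenL_trans by blast
qed

lemma Lclass_in_Lclasses: "x \<in> D \<Longrightarrow> {y. greenL x y} \<in> Lclasses D"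
  unfolding Lclasses_def by blast

lemma Lclasses_eqI:
  assumes "L \<in> Lclasses D" "K \<in> Lclasses D" "x \<in> L" "y \<in> K" "greenL x y"
  shows "L = K"
  using Lclass_eq[OF assms(1,3)] Lclass_eq[OF assms(2,4)] assms(5) greenL_sym greenL_trans
  by blast

lemma leJ_of_greenD: "D \<in> Dclasses \<Longrightarrow> x \<in> D \<Longrightarrow> y \<in> D \<Longrightarrow> leJ x y"
  using mem_Dclass_iff greenD_imp_leJ by blast

lemma leDcl_antisym:
  fixes D1 D2 :: "'a::{semigroup_mult, finite} set"
  assumes "D1 \<in> Dclasses" "D2 \<in> Dclasses" "leDcl D1 D2" "leDcl D2 D1"
  shows "D1 = D2"
proof -
  obtain x1 y2 where xy: "x1 \<in> D1" "y2 \<in> D2" "leJ x1 y2"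
    using assms(3) unfolding leDcl_def by blast
  obtain x2 y1 where "x2 \<in> D2" "y1 \<in> D1" "leJ x2 y1"
    using assms(4) unfolding leDcl_def by blast
  then have "leJ y2 x1"
    using xy assms(1,2) leJ_of_greenD leJ_trans by metis
  then have "greenD x1 y2"
    using greenD_if_leJ_leJ xy(3) by blast
  then show ?thesis
    using assms(1,2) xy mem_Dclass_iff Dclasses_disjoint by metis
qed

lemma leDcl_trans:
  assumes "D2 \<in> Dclasses" "leDcl D1 D2" "leDcl D2 D3"
  shows "leDcl D1 D3"
  using assms leJ_of_greenD leJ_trans unfolding leDcl_def by metis

lemma lessDcl_trans:
  fixes D1 D2 D3 :: "'a::{semigroup_mult, finite} set"
  assumes "D1 \<in> Dclasses" "D2 \<in> Dclasses" "lessDcl D1 D2" "lessDcl D2 D3"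
  shows "lessDcl D1 D3"
  using assms leDcl_trans leDcl_antisym unfolding lessDcl_def by metis

lemma lessDcl_asym:
  fixes D1 D2 :: "'a::{semigroup_mult, finite} set"
  assumes "D1 \<in> Dclasses" "D2 \<in> Dclasses" "lessDcl D1 D2"
  shows "\<not> lessDcl D2 D1"
  using assms leDcl_antisym unfolding lessDcl_def by blast

lemma partial_order_on_set_lex:
  assumes po: "\<forall>D\<in>A. partial_order_on_set (\<Lambda> D) (le D)"
    and asym: "\<And>D1 D2. D1 \<in> A \<Longrightarrow> D2 \<in> A \<Longrightarrow> lt D1 D2 \<Longrightarrow> \<not> lt D2 D1"
    and trans: "\<And>D1 D2 D3. D1 \<in> A \<Longrightarrow> D2 \<in> A \<Longrightarrow> lt D1 D2 \<Longrightarrow> lt D2 D3 \<Longrightarrow> lt D1 D3"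
  shows "partial_order_on_set {(D, l). D \<in> A \<and> l \<in> \<Lambda> D}
           (\<lambda>(D1, l1) (D2, l2). lt D1 D2 \<or> (D1 = D2 \<and> le D1 l1 l2))"
    (is "partial_order_on_set ?\<Lambda> ?le")
proof -
  have irrefl: "\<not> lt D D" if "D \<in> A" for D
    using asym[OF that that] by blast
  have "x = y" if mem: "x \<in> ?\<Lambda>" "y \<in> ?\<Lambda>" and le: "?le x y" "?le y x" for x y
  proof -
    obtain D1 l1 D2 l2 where xy: "x = (D1, l1)" "y = (D2, l2)"
      and D: "D1 \<in> A" "D2 \<in> A" and l: "l1 \<in> \<Lambda> D1" "l2 \<in> \<Lambda> D2"
      using mem by blast
    have le': "lt D1 D2 \<or> D1 = D2 \<and> le D1 l1 l2" "lt D2 D1 \<or> D2 = D1 \<and> le D2 l2 l1"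
      using le xy by simp_all
    then have "D1 = D2"
      using asym[OF D] by blast
    then have "le D1 l1 l2" "le D1 l2 l1"
      using le' irrefl[OF D(1)] by auto
    then have "l1 = l2"
      using po D(1) l \<open>D1 = D2\<close> unfolding partial_order_on_set_def by blast
    then show ?thesis
      using xy \<open>D1 = D2\<close> by simp
  qed
  moreover have "?le x z"
    if mem: "x \<in> ?\<Lambda>" "y \<in> ?\<Lambda>" "z \<in> ?\<Lambda>" and le: "?le x y" "?le y z" for x y z
  proof -
    obtain D1 l1 D2 l2 D3 l3 where xyz: "x = (D1, l1)" "y = (D2, l2)" "z = (D3, l3)"
      and D: "D1 \<in> A" "D2 \<in> A" "D3 \<in> A" and l: "l1 \<in> \<Lambda> D1" "l2 \<in> \<Lambda> D2" "l3 \<in> \<Lambda> D3"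
      using mem by blast
    have le': "lt D1 D2 \<or> D1 = D2 \<and> le D1 l1 l2" "lt D2 D3 \<or> D2 = D3 \<and> le D2 l2 l3"
      using le xyz by simp_all
    show ?thesis
    proof (cases "D1 = D2 \<and> D2 = D3")
      case True
      then have "le D1 l1 l2" "le D1 l2 l3"
        using le' irrefl[OF D(1)] by auto
      then have "le D1 l1 l3"
        using po D(1) l True unfolding partial_order_on_set_def by blast
      then show ?thesis
        using xyz True by simp
    next
      case False
      then have "lt D1 D3"
        using le' trans[OF D(1,2)] by blast
      then show ?thesis
        using xyz by simp
    qed
  qed
  moreover have "?le x x" if "x \<in> ?\<Lambda>" for x
    using po that unfolding partial_order_on_set_def by auto
  ultimately show ?thesis
    unfolding partial_order_on_set_def by blast
qed

locale semigroup_anti_involution =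
  fixes st :: "'a::semigroup_mult \<Rightarrow> 'a"
  assumes anti_involution: "anti_involution st"
begin

lemma st_st [simp]: "st (st x) = x"
  using anti_involution unfolding anti_involution_def by blast

lemma st_mult: "st (x * y) = st y * st x"
  using anti_involution unfolding anti_involution_def by blast

lemma st_eq_iff: "st x = st y \<longleftrightarrow> x = y"
  by (metis st_st)

lemma mem_image_st_iff: "y \<in> st ` A \<longleftrightarrow> st y \<in> A"
  by (metis image_iff st_st)

lemma sum_reindex_st: "(\<Sum>x\<in>st ` A. f x) = (\<Sum>x\<in>A. f (st x))"
  by (rule sum.reindex_bij_witness[of _ st st]) (auto simp: mem_image_st_iff)

lemma image_st_UNIV [simp]: "st ` UNIV = UNIV"
  by (metis surj_def st_st)

lemma sum_UNIV_st: "(\<Sum>x\<in>UNIV. f x) = (\<Sum>x\<in>UNIV. f (st x))"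
  using sum_reindex_st[of f UNIV] by simp

lemma sum_UNIV_st2: "(\<Sum>x\<in>UNIV. \<Sum>y\<in>UNIV. f x y) = (\<Sum>x\<in>UNIV. \<Sum>y\<in>UNIV. f (st x) (st y))"
proof -
  have "(\<Sum>x\<in>UNIV. \<Sum>y\<in>UNIV. f x y) = (\<Sum>x\<in>UNIV. \<Sum>y\<in>UNIV. f (st x) y)"
    by (rule sum_UNIV_st)
  also have "\<dots> = (\<Sum>x\<in>UNIV. \<Sum>y\<in>UNIV. f (st x) (st y))"
    by (rule sum.cong[OF refl]) (rule sum_UNIV_st)
  finally show ?thesis .
qed

lemma greenL_st_iff: "greenL (st x) (st y) \<longleftrightarrow> greenR x y"
  unfolding greenL_def greenR_def leL_def leR_def by (metis st_st st_mult)

lemma greenR_st_iff: "greenR (st x) (st y) \<longleftrightarrow> greenL x y"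
  using greenL_st_iff[of "st x" "st y"] by simp

lemma alg_anti_involution_UNIV:
  assumes sym: "\<forall>x y. \<alpha> x y = \<alpha> (st y) (st x)"
  shows "alg_anti_involution \<alpha> UNIV st"
  unfolding alg_anti_involution_def
proof (intro conjI ballI allI impI)
  fix f h :: "'a \<Rightarrow> 'b::comm_ring_1"
  show "tstar st UNIV (tmult \<alpha> UNIV f h) = tmult \<alpha> UNIV (tstar st UNIV h) (tstar st UNIV f)"
  proof
    fix z
    have "tmult \<alpha> UNIV (tstar st UNIV h) (tstar st UNIV f) z =
        (\<Sum>x\<in>UNIV. \<Sum>y\<in>UNIV. if x * y = z then \<alpha> x y * h (st x) * f (st y) else 0)"
      by (simp add: tmult_def tstar_def)
    also have "\<dots> = (\<Sum>x\<in>UNIV. \<Sum>y\<in>UNIV. if st x * st y = z then \<alpha> (st x) (st y) * h x * f y else 0)"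
      using sum_UNIV_st2[of "\<lambda>x y. if x * y = z then \<alpha> x y * h (st x) * f (st y) else 0"]
      by (simp only: st_st)
    also have "\<dots> = (\<Sum>x\<in>UNIV. \<Sum>y\<in>UNIV. if y * x = st z then \<alpha> y x * f y * h x else 0)"
    proof (rule sum.cong[OF refl])+
      fix x y
      have "st x * st y = z \<longleftrightarrow> y * x = st z"
        using st_eq_iff[of "y * x" "st z"] by (simp add: st_mult)
      moreover have "\<alpha> (st x) (st y) = \<alpha> y x"
        using sym by simp
      ultimately show "(if st x * st y = z then \<alpha> (st x) (st y) * h x * f y else 0) =
          (if y * x = st z then \<alpha> y x * f y * h x else 0)"
        by (simp add: mult_ac)
    qed
    also have "\<dots> = tstar st UNIV (tmult \<alpha> UNIV f h) z"
      by (subst sum.swap) (simp add: tmult_def tstar_def)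
    finally show "tstar st UNIV (tmult \<alpha> UNIV f h) z = tmult \<alpha> UNIV (tstar st UNIV h) (tstar st UNIV f) z"
      by simp
  qed
qed (simp_all add: tstar_def)

end

section \<open>Twisted algebras and cellular data\<close>

definition unit_inverse :: "'r::comm_ring_1 \<Rightarrow> 'r" where
  "unit_inverse a = (SOME b. a * b = 1)"

lemma unit_inverse_right:
  assumes "a dvd 1"
  shows "a * unit_inverse a = 1"
proof -
  obtain b where "1 = a * b"
    using assms by (rule dvdE)
  then have "\<exists>b. a * b = 1"
    by auto
  then show ?thesis
    unfolding unit_inverse_def by (rule someI_ex)
qed

definition tbasis :: "'a \<Rightarrow> 'a \<Rightarrow> 'r::comm_ring_1" where
  "tbasis x y = (if y = x then 1 else 0)"

lemma sum_Times_if_fst: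
  fixes f :: "'b \<Rightarrow> 'c::semiring_0"
  assumes "finite A" "a \<in> A"
  shows "(\<Sum>p\<in>A \<times> B. (if fst p = a then f (snd p) else 0) * G p) = (\<Sum>b\<in>B. f b * G (a, b))"
proof -
  have "(\<Sum>p\<in>A \<times> B. (if fst p = a then f (snd p) else 0) * G p) =
      (\<Sum>x\<in>A. \<Sum>b\<in>B. (if x = a then f b else 0) * G (x, b))"
    by (simp add: sum.cartesian_product split_def)
  also have "\<dots> = (\<Sum>x\<in>A. if x = a then (\<Sum>b\<in>B. f b * G (a, b)) else 0)"
    by (intro sum.cong refl) auto
  finally show ?thesis
    using assms by simp
qed

lemma tmult_tbasis_left:
  assumes "finite T" "x \<in> T"
  shows "tmult \<gamma> T (tbasis x) F z = (\<Sum>y\<in>T. if x * y = z then \<gamma> x y * F y else 0)"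
proof -
  have "tmult \<gamma> T (tbasis x) F z =
      (\<Sum>x'\<in>T. if x' = x then (\<Sum>y\<in>T. if x * y = z then \<gamma> x y * F y else 0) else 0)"
    unfolding tmult_def by (rule sum.cong[OF refl]) (auto simp: tbasis_def cong: if_cong)
  then show ?thesis
    using assms by simp
qed

lemma tmult_eq_sum_tbasis:
  assumes "finite T"
  shows "tmult \<gamma> T a F z = (\<Sum>x\<in>T. a x * tmult \<gamma> T (tbasis x) F z)"
proof -
  have "(\<Sum>x\<in>T. a x * tmult \<gamma> T (tbasis x) F z) =
      (\<Sum>x\<in>T. a x * (\<Sum>y\<in>T. if x * y = z then \<gamma> x y * F y else 0))"
    by (rule sum.cong[OF refl]) (simp add: tmult_tbasis_left[OF assms])
  also have "\<dots> = tmult \<gamma> T a F z"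
    unfolding tmult_def sum_distrib_left by (intro sum.cong refl) (simp add: mult_ac)
  finally show ?thesis ..
qed

lemma cspan_iff:
  "f \<in> cspan C J \<longleftrightarrow> (\<exists>c. f = (\<lambda>z. \<Sum>j\<in>J. c j * (case j of (l, s, t) \<Rightarrow> C l s t z)))"
proof -
  have "(\<lambda>(l, s, t). c (l, s, t) * C l s t z) = (\<lambda>j. c j * (case j of (l, s, t) \<Rightarrow> C l s t z))"
    for c z
    by (auto split: prod.splits)
  then show ?thesis
    unfolding cspan_def by simp
qed

lemma cspan_lincomb:
  assumes "finite J" "finite I" "\<And>i. i \<in> I \<Longrightarrow> F i \<in> cspan C J"
  shows "(\<lambda>z. \<Sum>i\<in>I. a i * F i z) \<in> cspan C J"
proof -
  have "\<forall>i\<in>I. \<exists>c. F i = (\<lambda>z. \<Sum>j\<in>J. c j * (case j of (l, s, t) \<Rightarrow> C l s t z))"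
    using assms(3)[unfolded cspan_iff] by (intro ballI)
  then obtain c where c: "\<forall>i\<in>I. F i = (\<lambda>z. \<Sum>j\<in>J. c i j * (case j of (l, s, t) \<Rightarrow> C l s t z))"
    by (rule bchoice[THEN exE])
  have "(\<lambda>z. \<Sum>i\<in>I. a i * F i z) =
      (\<lambda>z. \<Sum>j\<in>J. (\<Sum>i\<in>I. a i * c i j) * (case j of (l, s, t) \<Rightarrow> C l s t z))"
  proof
    fix z
    have "(\<Sum>i\<in>I. a i * F i z) = (\<Sum>i\<in>I. \<Sum>j\<in>J. a i * c i j * (case j of (l, s, t) \<Rightarrow> C l s t z))"
      by (rule sum.cong[OF refl]) (simp add: c sum_distrib_left mult.assoc)
    also have "\<dots> = (\<Sum>j\<in>J. (\<Sum>i\<in>I. a i * c i j) * (case j of (l, s, t) \<Rightarrow> C l s t z))"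
      by (subst sum.swap) (simp add: sum_distrib_right)
    finally show "(\<Sum>i\<in>I. a i * F i z) =
        (\<Sum>j\<in>J. (\<Sum>i\<in>I. a i * c i j) * (case j of (l, s, t) \<Rightarrow> C l s t z))" .
  qed
  then show ?thesis
    unfolding cspan_iff by (rule exI[where x = "\<lambda>j. \<Sum>i\<in>I. a i * c i j"])
qed

lemma cspan_scale: "finite J \<Longrightarrow> F \<in> cspan C J \<Longrightarrow> (\<lambda>z. a * F z) \<in> cspan C J"
  using cspan_lincomb[of J "{()}" "\<lambda>_. F" C "\<lambda>_. a"] by simp

lemma cspan_basis:
  assumes "finite J" "(l, s, t) \<in> J"
  shows "C l s t \<in> cspan C J"
proof -
  have "C l s t = (\<lambda>z. \<Sum>j\<in>J. (if j = (l, s, t) then 1 else 0) * (case j of (l, s, t) \<Rightarrow> C l s t z))"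
    using assms by (simp add: if_distrib if_distribR cong: if_cong)
  then show ?thesis
    unfolding cspan_iff by (rule exI[where x = "\<lambda>j. if j = (l, s, t) then 1 else 0"])
qed

definition expansion :: "('l \<Rightarrow> 'm \<Rightarrow> 'm \<Rightarrow> 'a \<Rightarrow> 'r::comm_ring_1) \<Rightarrow> ('l \<times> 'm \<times> 'm) set
    \<Rightarrow> ('l \<times> 'm \<times> 'm \<Rightarrow> 'r) \<Rightarrow> ('a \<Rightarrow> 'r) \<Rightarrow> bool" where
  "expansion C J c f \<longleftrightarrow> (\<forall>i. i \<notin> J \<longrightarrow> c i = 0) \<and> f = (\<lambda>z. \<Sum>(l, s, t)\<in>J. c (l, s, t) * C l s t z)"

definition the_expansion :: "('l \<Rightarrow> 'm \<Rightarrow> 'm \<Rightarrow> 'a \<Rightarrow> 'r::comm_ring_1) \<Rightarrow> ('l \<times> 'm \<times> 'm) set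
    \<Rightarrow> ('a \<Rightarrow> 'r) \<Rightarrow> 'l \<times> 'm \<times> 'm \<Rightarrow> 'r" where
  "the_expansion C J f = (THE c. expansion C J c f)"

lemma expansion_the_expansion: "\<exists>!c. expansion C J c f \<Longrightarrow> expansion C J (the_expansion C J f) f"
  unfolding the_expansion_def by (rule theI'[where P = "\<lambda>c. expansion C J c f"])

lemma the_expansion_unique: "\<exists>!c. expansion C J c f \<Longrightarrow> expansion C J c f \<Longrightarrow> the_expansion C J f = c"
  unfolding the_expansion_def by (rule the1_equality[where P = "\<lambda>c. expansion C J c f"])

lemma
  assumes "cellular T \<gamma> \<sigma> \<Lambda> le M C"
  shows cellular_finite: "finite \<Lambda>"
    and cellular_partial_order: "partial_order_on_set \<Lambda> le"
    and cellular_finite_M: "l \<in> \<Lambda> \<Longrightarrow> finite (M l)"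
    and cellular_tvec: "l \<in> \<Lambda> \<Longrightarrow> s \<in> M l \<Longrightarrow> t \<in> M l \<Longrightarrow> C l s t \<in> tvec T"
    and cellular_expansion: "f \<in> tvec T \<Longrightarrow> \<exists>!c. expansion C (cell_idx \<Lambda> M) c f"
    and cellular_star: "l \<in> \<Lambda> \<Longrightarrow> s \<in> M l \<Longrightarrow> t \<in> M l \<Longrightarrow> tstar \<sigma> T (C l s t) = C l t s"
    and cellular_mult_left: "l \<in> \<Lambda> \<Longrightarrow> s \<in> M l \<Longrightarrow> a \<in> tvec T \<Longrightarrow> \<exists>r. \<forall>t\<in>M l.
          (\<lambda>z. tmult \<gamma> T a (C l s t) z - (\<Sum>s'\<in>M l. r s' * C l s' t z))
            \<in> cspan C {(m, s'', t''). (m, s'', t'') \<in> cell_idx \<Lambda> M \<and> le m l \<and> m \<noteq> l}"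
  using assms unfolding cellular_def expansion_def by (auto simp only:)

lemma mem_cell_idx: "(l, s, t) \<in> cell_idx \<Lambda> M \<longleftrightarrow> l \<in> \<Lambda> \<and> s \<in> M l \<and> t \<in> M l"
  by (simp add: cell_idx_def)

lemma finite_cell_idx: "finite \<Lambda> \<Longrightarrow> (\<And>l. l \<in> \<Lambda> \<Longrightarrow> finite (M l)) \<Longrightarrow> finite (cell_idx \<Lambda> M)"
  unfolding cell_idx_def by (intro finite_SigmaI) auto


section \<open>Coordinates on a D-class\<close>

locale semigroup_cell_datum = semigroup_anti_involution st
  for st :: "'a::{semigroup_mult, finite} \<Rightarrow> 'a" +
  fixes \<alpha> :: "'a \<Rightarrow> 'a \<Rightarrow> 'r::comm_ring_1"
    and one :: "'a set \<Rightarrow> 'a"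
    and \<beta> :: "'a set \<Rightarrow> 'a \<Rightarrow> 'a \<Rightarrow> 'r"
    and \<Lambda>D :: "'a set \<Rightarrow> 'l set"
    and leD :: "'a set \<Rightarrow> 'l \<Rightarrow> 'l \<Rightarrow> bool"
    and MD :: "'a set \<Rightarrow> 'l \<Rightarrow> 'm set"
    and CD :: "'a set \<Rightarrow> 'l \<Rightarrow> 'm \<Rightarrow> 'm \<Rightarrow> ('a \<Rightarrow> 'r)"
    and u :: "'a set \<Rightarrow> 'a"
  assumes A1: "\<forall>x y. \<alpha> x y = \<alpha> (st y) (st x)"
    and A2: "\<forall>D\<in>Dclasses. one D \<in> D \<and> one D * one D = one D \<and> st (one D) = one D"
    and A3_unit: "\<forall>D\<in>Dclasses. \<forall>x\<in>LD one D. \<forall>y\<in>st ` LD one D. \<beta> D x y dvd 1"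
    and A3_cocycle: "\<forall>D\<in>Dclasses. \<forall>x y z.
        x \<in> LD one D \<and> y \<in> st ` LD one D \<and> x * y \<in> LD one D \<and> z \<in> st ` LD one D \<and>
        y * z \<in> st ` LD one D \<and> y \<in> LD one D \<longrightarrow>
        \<beta> D x y * \<beta> D (x * y) z = \<beta> D x (y * z) * \<beta> D y z"
    and A3_compat: "\<forall>D\<in>Dclasses. \<forall>x y z.
        x * y \<in> LD one D \<and> z \<in> st ` LD one D \<and> y \<in> LD one D \<longrightarrow>
        \<alpha> x y * \<beta> D (x * y) z = \<alpha> x (y * z) * \<beta> D y z"
    and A3_sym: "\<forall>D\<in>Dclasses. \<forall>x y.
        x \<in> LD one D \<and> y \<in> st ` LD one D \<and> st y \<in> LD one D \<and> st x \<in> st ` LD one D \<longrightarrow>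
        \<beta> D x y = \<beta> D (st y) (st x)"
    and A4: "\<forall>D\<in>Dclasses. cellular (GD st one D) (\<beta> D) st (\<Lambda>D D) (leD D) (MD D) (CD D)"
    and u_choice: "\<forall>D\<in>Dclasses. \<forall>L\<in>Lclasses D. u L \<in> L \<and> greenR (u L) (one D)"
begin

abbreviation Lc :: "'a set \<Rightarrow> 'a set" where
  "Lc D \<equiv> LD one D"

abbreviation Gc :: "'a set \<Rightarrow> 'a set" where
  "Gc D \<equiv> GD st one D"

abbreviation sandwich :: "'a set \<Rightarrow> 'a \<Rightarrow> 'a set \<Rightarrow> 'a" where
  "sandwich L g K \<equiv> st (u L) * g * u K"

context
  fixes D :: "'a set"
  assumes D: "D \<in> Dclasses"
begin

lemma one_mem: "one D \<in> D"
  and one_idem: "one D * one D = one D"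
  and st_one: "st (one D) = one D"
  using A2 D by blast+

lemma mem_Lc_iff: "y \<in> Lc D \<longleftrightarrow> y * one D = y \<and> (\<exists>t. t * y = one D)"
  by (auto simp: LD_def greenL_def leL_idempotent_iff[OF one_idem] idempotent_leL_iff[OF one_idem])

lemma mem_Rc_iff_greenR: "y \<in> st ` Lc D \<longleftrightarrow> greenR (one D) y"
  using greenL_st_iff[of "one D" y] st_one by (simp add: mem_image_st_iff LD_def)

lemma mem_Rc_iff: "y \<in> st ` Lc D \<longleftrightarrow> one D * y = y \<and> (\<exists>t. y * t = one D)"
  by (auto simp: mem_Rc_iff_greenR greenR_def leR_idempotent_iff[OF one_idem]
      idempotent_leR_iff[OF one_idem])

lemma mem_Gc_iff: "g \<in> Gc D \<longleftrightarrow> g \<in> Lc D \<and> g \<in> st ` Lc D"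
  unfolding GD_def by blast

lemma Lc_mult_Gc:
  assumes "a \<in> Lc D" "g \<in> Gc D"
  shows "a * g \<in> Lc D"
proof -
  obtain s where a: "a * one D = a" "s * a = one D"
    using assms(1) mem_Lc_iff by blast
  obtain t where g: "g * one D = g" "t * g = one D" "one D * g = g"
    using assms(2) mem_Gc_iff mem_Lc_iff mem_Rc_iff by blast
  have "a * g * one D = a * g"
    using g by (simp add: mult.assoc)
  moreover have "(t * s) * (a * g) = t * ((s * a) * g)"
    by (simp add: mult.assoc)
  then have "(t * s) * (a * g) = one D"
    using a g by simp
  ultimately show ?thesis
    unfolding mem_Lc_iff by blast
qed

lemma st_mem_Gc: "g \<in> Gc D \<Longrightarrow> st g \<in> Gc D"
  unfolding mem_Gc_iff mem_image_st_iff by simp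

lemma Gc_mult_Rc:
  assumes "a \<in> st ` Lc D" "g \<in> Gc D"
  shows "g * a \<in> st ` Lc D"
  using Lc_mult_Gc[of "st a" "st g"] assms st_mem_Gc by (simp add: mem_image_st_iff st_mult)

lemma Gc_mult:
  assumes "g \<in> Gc D" "h \<in> Gc D"
  shows "g * h \<in> Gc D"
proof -
  have "g \<in> Lc D" "h \<in> st ` Lc D"
    using assms mem_Gc_iff by auto
  then show ?thesis
    using Lc_mult_Gc[OF _ assms(2)] Gc_mult_Rc[OF _ assms(1)] mem_Gc_iff by simp
qed

lemma image_st_Gc: "st ` Gc D = Gc D"
proof (rule set_eqI)
  fix x
  show "x \<in> st ` Gc D \<longleftrightarrow> x \<in> Gc D"
    using st_mem_Gc[of x] st_mem_Gc[of "st x"] by (auto simp: mem_image_st_iff)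
qed

lemma beta_unit: "x \<in> Lc D \<Longrightarrow> y \<in> st ` Lc D \<Longrightarrow> \<beta> D x y dvd 1"
  using A3_unit D by blast

lemma beta_sym:
  assumes "x \<in> Lc D" "y \<in> st ` Lc D"
  shows "\<beta> D x y = \<beta> D (st y) (st x)"
proof -
  have "st y \<in> Lc D" "st x \<in> st ` Lc D"
    using assms mem_image_st_iff by auto
  then show ?thesis
    using A3_sym D assms by blast
qed

lemma beta_cocycle:
  assumes "x \<in> Lc D" "y \<in> Gc D" "z \<in> st ` Lc D"
  shows "\<beta> D x y * \<beta> D (x * y) z = \<beta> D x (y * z) * \<beta> D y z"
proof -
  have "x * y \<in> Lc D" "y * z \<in> st ` Lc D" "y \<in> Lc D" "y \<in> st ` Lc D"
    using Lc_mult_Gc Gc_mult_Rc assms mem_Gc_iff by auto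
  then show ?thesis
    using A3_cocycle D assms(1,3) by blast
qed

lemma alpha_beta_compat:
  "x * y \<in> Lc D \<Longrightarrow> y \<in> Lc D \<Longrightarrow> z \<in> st ` Lc D \<Longrightarrow>
    \<alpha> x y * \<beta> D (x * y) z = \<alpha> x (y * z) * \<beta> D y z"
  using A3_compat D by blast

context
  fixes L :: "'a set"
  assumes L: "L \<in> Lclasses D"
begin

lemma u_mem: "u L \<in> L"
  using u_choice D L by blast

lemma u_mem_Rc: "u L \<in> st ` Lc D"
proof -
  have "greenR (u L) (one D)"
    using u_choice D L by blast
  then show ?thesis
    using greenR_sym mem_Rc_iff_greenR by blast
qed

lemma st_u_mem_Lc: "st (u L) \<in> Lc D"
  using u_mem_Rc mem_image_st_iff by blast

end


lemma Gc_inverses: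
  assumes "g \<in> Gc D"
  obtains a b where "a * g = one D" "g * b = one D" "g * one D = g" "one D * g = g"
  using assms mem_Gc_iff mem_Lc_iff mem_Rc_iff by metis

context
  fixes L K g
  assumes L: "L \<in> Lclasses D" and K: "K \<in> Lclasses D" and g: "g \<in> Gc D"
begin

lemma sandwich_greenR: "greenR (sandwich L g K) (st (u L))"
proof -
  obtain b where b: "u K * b = one D"
    using u_mem_Rc[OF K] mem_Rc_iff by blast
  obtain a' b' where g': "g * b' = one D" "g * one D = g"
    using Gc_inverses[OF g] by metis
  have "st (u L) * one D = st (u L)"
    using st_u_mem_Lc[OF L] mem_Lc_iff by blast
  moreover have "sandwich L g K * (b * b') = st (u L) * (g * (u K * b) * b')"
    by (simp add: mult.assoc)
  ultimately have "sandwich L g K * (b * b') = st (u L)"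
    using b g' by simp
  moreover have "sandwich L g K = st (u L) * (g * u K)"
    by (simp add: mult.assoc)
  ultimately show ?thesis
    unfolding greenR_def leR_def by metis
qed

lemma sandwich_greenL: "greenL (sandwich L g K) (u K)"
proof -
  obtain a where a: "a * st (u L) = one D"
    using st_u_mem_Lc[OF L] mem_Lc_iff by blast
  obtain a' where g': "a' * g = one D" "one D * g = g"
    using Gc_inverses[OF g] by metis
  have "one D * u K = u K"
    using u_mem_Rc[OF K] mem_Rc_iff by blast
  moreover have "(a' * a) * sandwich L g K = a' * ((a * st (u L)) * g) * u K"
    by (simp add: mult.assoc)
  ultimately have "(a' * a) * sandwich L g K = u K"
    using a g' by simp
  then show ?thesis
    unfolding greenL_def leL_def by (metis mult.assoc)
qed

lemma sandwich_mem: "sandwich L g K \<in> D"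
proof -
  have "greenD (one D) (u K)"
    using u_mem_Rc[OF K] mem_Rc_iff_greenR greenR_imp_greenD by blast
  then have "greenD (one D) (sandwich L g K)"
    using sandwich_greenL greenL_sym greenL_imp_greenD greenD_trans by blast
  then show ?thesis
    using mem_Dclass_iff[OF D one_mem] by blast
qed

end

lemma sandwich_inj:
  assumes L: "L \<in> Lclasses D" and K: "K \<in> Lclasses D" and g: "g \<in> Gc D"
    and L': "L' \<in> Lclasses D" and K': "K' \<in> Lclasses D" and g': "g' \<in> Gc D"
    and eq: "sandwich L g K = sandwich L' g' K'"
  shows "L = L'" "K = K'" "g = g'"
proof -
  have "greenL (u K) (u K')"
    using sandwich_greenL[OF L K g] sandwich_greenL[OF L' K' g'] eq greenL_sym greenL_trans by metis
  then show K_eq: "K = K'"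
    using Lclasses_eqI[OF K K' u_mem[OF K] u_mem[OF K']] by blast
  have "greenR (st (u L)) (st (u L'))"
    using sandwich_greenR[OF L K g] sandwich_greenR[OF L' K' g'] eq greenR_sym greenR_trans by metis
  then show L_eq: "L = L'"
    using Lclasses_eqI[OF L L' u_mem[OF L] u_mem[OF L']] greenR_st_iff by blast
  obtain a where a: "a * st (u L) = one D"
    using st_u_mem_Lc[OF L] mem_Lc_iff by blast
  obtain b where b: "u K * b = one D"
    using u_mem_Rc[OF K] mem_Rc_iff by blast
  have recover: "a * sandwich L h K * b = h" if "h \<in> Gc D" for h
  proof -
    have "a * sandwich L h K * b = (a * st (u L)) * h * (u K * b)"
      by (simp add: mult.assoc)
    then show ?thesis
      using a b Gc_inverses[OF that] by metis
  qed
  show "g = g'"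
    using recover[OF g] recover[OF g'] eq L_eq K_eq by metis
qed

lemma Dclass_obtain_u:
  assumes z: "z \<in> D"
  obtains L K where "L \<in> Lclasses D" "K \<in> Lclasses D" "greenR z (st (u L))" "greenL z (u K)"
proof -
  have "greenD z (one D)"
    using z mem_Dclass_iff[OF D one_mem] greenD_sym by blast
  then obtain y where y: "greenR z y" "greenL y (one D)"
    by (rule greenD_obtain_greenR_greenL)
  have "greenR (st y) (one D)"
    using y(2) greenR_st_iff[of y "one D"] st_one by simp
  then have "st y \<in> D"
    using mem_Dclass_iff[OF D one_mem] greenR_imp_greenD greenD_sym by blast
  define L where "L = {x. greenL (st y) x}"
  have L: "L \<in> Lclasses D"
    unfolding L_def using Lclass_in_Lclasses[OF \<open>st y \<in> D\<close>] .
  have "greenL (st y) (u L)"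
    using u_mem[OF L] by (simp add: L_def)
  then have "greenR z (st (u L))"
    using y(1) greenR_st_iff[of "st y" "u L"] greenR_trans by simp
  moreover define K where "K = {x. greenL z x}"
  then have K: "K \<in> Lclasses D"
    using Lclass_in_Lclasses[OF z] by simp
  moreover have "greenL z (u K)"
    using u_mem[OF K] by (simp add: K_def)
  ultimately show thesis
    using that L by blast
qed

lemma sandwich_surj:
  assumes z: "z \<in> D"
  obtains L g K where "L \<in> Lclasses D" "g \<in> Gc D" "K \<in> Lclasses D" "z = sandwich L g K"
proof -
  obtain L K where L: "L \<in> Lclasses D" and K: "K \<in> Lclasses D"
    and "greenR z (st (u L))" "greenL z (u K)"
    by (rule Dclass_obtain_u[OF z])
  then obtain p p' q q' where p: "z = rmult1 (st (u L)) p" "st (u L) = rmult1 z p'"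
    and q: "z = lmult1 q (u K)" "u K = lmult1 q' z"
    unfolding greenR_def leR_iff_rmult1 greenL_def leL_iff_lmult1 by blast
  obtain a where a: "a * st (u L) = one D" "st (u L) * one D = st (u L)"
    using st_u_mem_Lc[OF L] mem_Lc_iff by blast
  obtain b where b: "u K * b = one D" "one D * u K = u K"
    using u_mem_Rc[OF K] mem_Rc_iff by blast
  define g where "g = a * z * b"
  have az: "a * z = rmult1 (one D) p"
    using a(1) by (simp add: p(1) flip: rmult1_mult mult.assoc)
  have "st (u L) * a * z = rmult1 (st (u L) * one D) p"
    by (simp add: az rmult1_mult mult.assoc)
  then have left_id: "st (u L) * a * z = z"
    using a(2) p(1) by simp
  have right_id: "z * b * u K = z"
    using b by (simp add: q(1) flip: lmult1_mult)
  have "st (u L) * g = (st (u L) * a * z) * b"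
    by (simp add: g_def mult.assoc)
  then have zb: "z * b = st (u L) * g"
    using left_id by simp
  have "z = sandwich L g K"
    using right_id by (simp add: zb flip: mult.assoc)
  moreover have "g \<in> Lc D"
    unfolding mem_Lc_iff
  proof
    have "g * one D = a * (z * b * u K) * b"
      by (simp add: g_def flip: b(1)) (simp add: mult.assoc)
    then show "g * one D = g"
      using right_id by (simp add: g_def)
    have "one D = lmult1 q' (z * b)"
      using b(1) by (simp add: q(2) lmult1_mult)
    then show "\<exists>t. t * g = one D"
      by (metis zb lmult1_mult)
  qed
  moreover have "g \<in> st ` Lc D"
    unfolding mem_Rc_iff
  proof
    show "one D * g = g"
      using one_idem by (simp add: g_def az flip: rmult1_mult mult.assoc)
    have "a * z = g * u K"
      using right_id by (simp add: g_def mult.assoc)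
    moreover have "one D = rmult1 (a * z) p'"
      using a(1) by (simp add: p(2) rmult1_mult)
    ultimately show "\<exists>t. g * t = one D"
      by (metis rmult1_mult)
  qed
  ultimately show thesis
    using that L K mem_Gc_iff by blast
qed

lemma Lc_decomp:
  assumes v: "v \<in> Lc D"
  obtains L h where "L \<in> Lclasses D" "h \<in> Gc D" "v = st (u L) * h"
proof -
  have "greenL (one D) v"
    using v by (simp add: LD_def)
  then have "v \<in> D"
    using mem_Dclass_iff[OF D one_mem] greenL_imp_greenD by blast
  then obtain L g K where L: "L \<in> Lclasses D" and g: "g \<in> Gc D" and K: "K \<in> Lclasses D"
    and v_eq: "v = sandwich L g K"
    by (rule sandwich_surj)
  have "greenL (one D) (u K)"
    using \<open>greenL (one D) v\<close> sandwich_greenL[OF L K g] v_eq greenL_trans by blast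
  then have "u K \<in> Gc D"
    using u_mem_Rc[OF K] mem_Gc_iff by (simp add: LD_def)
  then have "g * u K \<in> Gc D"
    by (rule Gc_mult[OF g])
  moreover have "v = st (u L) * (g * u K)"
    by (simp add: v_eq mult.assoc)
  ultimately show thesis
    using that L by blast
qed

end

section \<open>The cellular basis of the twisted semigroup algebra\<close>

text \<open>
  block_embed D L K is the rescaled embedding of R^\<beta>_D[G_D] as the (L, K)-block of R^\<alpha>[S],
  and block_of D L K is a left inverse of it; lower_idx i indexes A(<i).
\<close>

definition sandwich_unit :: "'a set \<Rightarrow> 'a set \<Rightarrow> 'a \<Rightarrow> 'a set \<Rightarrow> 'r" where
  "sandwich_unit D L g K = \<beta> D (st (u L)) g * \<beta> D (st (u L) * g) (u K)"

definition block_embed :: "'a set \<Rightarrow> 'a set \<Rightarrow> 'a set \<Rightarrow> ('a \<Rightarrow> 'r) \<Rightarrow> 'a \<Rightarrow> 'r" where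
  "block_embed D L K F = (\<lambda>z. \<Sum>g\<in>Gc D. if sandwich L g K = z
     then F g * \<beta> D (st (u L)) g * \<beta> D (st (u L) * g) (u K) else 0)"

definition block_of :: "'a set \<Rightarrow> 'a set \<Rightarrow> 'a set \<Rightarrow> ('a \<Rightarrow> 'r) \<Rightarrow> 'a \<Rightarrow> 'r" where
  "block_of D L K f = (\<lambda>g. if g \<in> Gc D
     then f (sandwich L g K) * unit_inverse (sandwich_unit D L g K) else 0)"

definition \<Lambda>_S :: "('a set \<times> 'l) set" where
  "\<Lambda>_S = {(D, l). D \<in> Dclasses \<and> l \<in> \<Lambda>D D}"

definition le_S :: "'a set \<times> 'l \<Rightarrow> 'a set \<times> 'l \<Rightarrow> bool" where
  "le_S = (\<lambda>(D1, l1) (D2, l2). lessDcl D1 D2 \<or> (D1 = D2 \<and> leD D1 l1 l2))"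

definition M_S :: "'a set \<times> 'l \<Rightarrow> ('a set \<times> 'm) set" where
  "M_S = (\<lambda>(D, l). Lclasses D \<times> MD D l)"

definition C_S :: "'a set \<times> 'l \<Rightarrow> 'a set \<times> 'm \<Rightarrow> 'a set \<times> 'm \<Rightarrow> 'a \<Rightarrow> 'r" where
  "C_S = (\<lambda>(D, l) (L, s) (K, t). block_embed D L K (CD D l s t))"

definition lower_idx :: "'a set \<times> 'l \<Rightarrow> (('a set \<times> 'l) \<times> ('a set \<times> 'm) \<times> ('a set \<times> 'm)) set" where
  "lower_idx i = {(m, s, t). (m, s, t) \<in> cell_idx \<Lambda>_S M_S \<and> le_S m i \<and> m \<noteq> i}"

lemma C_S_apply [simp]: "C_S (D, l) (L, s) (K, t) = block_embed D L K (CD D l s t)"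
  by (simp add: C_S_def)

lemma G_cellular: "D \<in> Dclasses \<Longrightarrow> cellular (Gc D) (\<beta> D) st (\<Lambda>D D) (leD D) (MD D) (CD D)"
  using A4 by blast

lemma finite_\<Lambda>_S: "finite \<Lambda>_S"
proof (rule finite_subset)
  show "\<Lambda>_S \<subseteq> Sigma Dclasses \<Lambda>D"
    unfolding \<Lambda>_S_def by auto
  show "finite (Sigma Dclasses \<Lambda>D)"
    using cellular_finite[OF G_cellular] by auto
qed

lemma finite_M_S: "i \<in> \<Lambda>_S \<Longrightarrow> finite (M_S i)"
  using cellular_finite_M[OF G_cellular] by (auto simp: \<Lambda>_S_def M_S_def)

lemma finite_cell_idx_S: "finite (cell_idx \<Lambda>_S M_S)"
  using finite_\<Lambda>_S finite_M_S by (rule finite_cell_idx)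

lemma finite_lower_idx: "finite (lower_idx i)"
  by (rule finite_subset[OF _ finite_cell_idx_S]) (auto simp: lower_idx_def)

lemma block_embed_eq: "block_embed D L K F z = (\<Sum>g\<in>Gc D. F g * (if sandwich L g K = z then sandwich_unit D L g K else 0))"
  unfolding block_embed_def sandwich_unit_def by (rule sum.cong[OF refl]) (simp add: mult.assoc)

lemma block_embed_sum: "block_embed D L K (\<lambda>y. \<Sum>i\<in>I. c i * F i y) z = (\<Sum>i\<in>I. c i * block_embed D L K (F i) z)"
  unfolding block_embed_eq by (simp add: sum_distrib_left sum_distrib_right mult.assoc sum.swap[of _ I])

lemma block_embed_diff: "block_embed D L K (\<lambda>y. F y - F' y) z = block_embed D L K F z - block_embed D L K F' z"
  unfolding block_embed_eq by (simp add: left_diff_distrib sum_subtractf)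

lemma tbasis_mult_block_embed:
  "tmult \<alpha> UNIV (tbasis x) (block_embed D L K F) z = (\<Sum>g\<in>Gc D.
     F g * (if x * sandwich L g K = z then \<alpha> x (sandwich L g K) * sandwich_unit D L g K else 0))"
proof -
  let ?G = "\<lambda>g y. F g * (if x * y = z then \<alpha> x y * sandwich_unit D L g K else 0)"
  have "tmult \<alpha> UNIV (tbasis x) (block_embed D L K F) z =
      (\<Sum>y\<in>UNIV. if x * y = z then \<alpha> x y * block_embed D L K F y else 0)"
    by (simp add: tmult_tbasis_left)
  also have "\<dots> = (\<Sum>y\<in>UNIV. \<Sum>g\<in>Gc D. if sandwich L g K = y then ?G g y else 0)"
  proof (rule sum.cong[OF refl])
    fix y
    show "(if x * y = z then \<alpha> x y * block_embed D L K F y else 0) =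
        (\<Sum>g\<in>Gc D. if sandwich L g K = y then ?G g y else 0)"
      by (cases "x * y = z")
        (auto simp: block_embed_eq sum_distrib_left mult_ac cong: if_cong intro!: sum.cong)
  qed
  also have "\<dots> = (\<Sum>g\<in>Gc D. ?G g (sandwich L g K))"
    by (subst sum.swap) simp
  finally show ?thesis .
qed

lemma block_embed_outside:
  assumes "D \<in> Dclasses" "L \<in> Lclasses D" "K \<in> Lclasses D" "z \<notin> D"
  shows "block_embed D L K F z = 0"
  unfolding block_embed_def using sandwich_mem[OF assms(1-3)] assms(4) by (intro sum.neutral) auto

context
  fixes D :: "'a set"
  assumes D: "D \<in> Dclasses"
begin

lemma sandwich_unit_dvd_1:
  assumes L: "L \<in> Lclasses D" and K: "K \<in> Lclasses D" and g: "g \<in> Gc D"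
  shows "sandwich_unit D L g K dvd 1"
proof -
  have "\<beta> D (st (u L)) g dvd 1"
    using beta_unit[OF D st_u_mem_Lc[OF D L]] g mem_Gc_iff[OF D] by blast
  moreover have "\<beta> D (st (u L) * g) (u K) dvd 1"
    using beta_unit[OF D Lc_mult_Gc[OF D st_u_mem_Lc[OF D L] g] u_mem_Rc[OF D K]] .
  ultimately show ?thesis
    unfolding sandwich_unit_def using mult_dvd_mono[of _ 1 _ 1] by simp
qed

lemma block_embed_sandwich:
  assumes L: "L \<in> Lclasses D" and K: "K \<in> Lclasses D"
    and L0: "L0 \<in> Lclasses D" and K0: "K0 \<in> Lclasses D" and g0: "g0 \<in> Gc D"
  shows "block_embed D L K F (sandwich L0 g0 K0) =
    (if L = L0 \<and> K = K0 then F g0 * sandwich_unit D L0 g0 K0 else 0)"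
proof -
  have "sandwich L g K = sandwich L0 g0 K0 \<longleftrightarrow> L = L0 \<and> K = K0 \<and> g = g0" if "g \<in> Gc D" for g
    using sandwich_inj[OF D L K that L0 K0 g0] by auto
  then have "block_embed D L K F (sandwich L0 g0 K0) =
      (\<Sum>g\<in>Gc D. if g = g0 then (if L = L0 \<and> K = K0 then F g * sandwich_unit D L0 g K0 else 0) else 0)"
    unfolding block_embed_eq by (intro sum.cong refl) auto
  then show ?thesis
    using g0 by simp
qed

lemma C_S_at_sandwich:
  assumes D': "D' \<in> Dclasses" "L \<in> Lclasses D'" "K \<in> Lclasses D'"
    and L0: "L0 \<in> Lclasses D" and K0: "K0 \<in> Lclasses D" and g0: "g0 \<in> Gc D"
  shows "C_S (D', l) (L, s) (K, t) (sandwich L0 g0 K0) =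
    (if D' = D \<and> L = L0 \<and> K = K0 then CD D l s t g0 * sandwich_unit D L0 g0 K0 else 0)"
proof (cases "D' = D")
  case True
  then show ?thesis
    using block_embed_sandwich[OF _ _ L0 K0 g0] D' by simp
next
  case False
  then have "sandwich L0 g0 K0 \<notin> D'"
    using sandwich_mem[OF D L0 K0 g0] Dclasses_disjoint[OF D'(1) D] by blast
  then show ?thesis
    using block_embed_outside[OF D'] False by simp
qed

lemma sum_C_S_sandwich:
  assumes L0: "L0 \<in> Lclasses D" and K0: "K0 \<in> Lclasses D" and g0: "g0 \<in> Gc D"
  shows "(\<Sum>(l, s, t)\<in>cell_idx \<Lambda>_S M_S. c (l, s, t) * C_S l s t (sandwich L0 g0 K0)) =
    sandwich_unit D L0 g0 K0 *
      (\<Sum>(l, s, t)\<in>cell_idx (\<Lambda>D D) (MD D). c ((D, l), (L0, s), (K0, t)) * CD D l s t g0)"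
proof -
  define emb where "emb = (\<lambda>(l :: 'l, s :: 'm, t :: 'm). ((D, l), (L0, s), (K0, t)))"
  let ?F = "\<lambda>(l, s, t). c (l, s, t) * C_S l s t (sandwich L0 g0 K0)"
  let ?small = "cell_idx (\<Lambda>D D) (MD D)"
  have sub: "emb ` ?small \<subseteq> cell_idx \<Lambda>_S M_S"
    using D L0 K0 by (auto simp: emb_def mem_cell_idx \<Lambda>_S_def M_S_def)
  have "?F i = 0" if i: "i \<in> cell_idx \<Lambda>_S M_S - emb ` ?small" for i
  proof -
    obtain D' l L s K t where i_eq: "i = ((D', l), (L, s), (K, t))"
      by (metis prod.collapse)
    have mem: "D' \<in> Dclasses" "L \<in> Lclasses D'" "K \<in> Lclasses D'" "(l, s, t) \<in> cell_idx (\<Lambda>D D') (MD D')"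
      using i i_eq by (auto simp: mem_cell_idx \<Lambda>_S_def M_S_def)
    then have "\<not> (D' = D \<and> L = L0 \<and> K = K0)"
      using i i_eq image_eqI[of i emb "(l, s, t)" ?small] by (auto simp: emb_def)
    then show ?thesis
      using C_S_at_sandwich[OF mem(1-3) L0 K0 g0] i_eq by auto
  qed
  then have "(\<Sum>i\<in>cell_idx \<Lambda>_S M_S. ?F i) = (\<Sum>i\<in>emb ` ?small. ?F i)"
    by (intro sum.mono_neutral_right[OF finite_cell_idx_S sub]) blast
  also have "\<dots> = (\<Sum>j\<in>?small. ?F (emb j))"
    by (rule sum.reindex[unfolded comp_def]) (auto simp: inj_on_def emb_def)
  also have "\<dots> = (\<Sum>(l, s, t)\<in>?small.
      sandwich_unit D L0 g0 K0 * (c ((D, l), (L0, s), (K0, t)) * CD D l s t g0))"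
    using C_S_at_sandwich[OF D L0 K0 L0 K0 g0] by (intro sum.cong refl) (auto simp: emb_def mult_ac)
  also have "\<dots> = sandwich_unit D L0 g0 K0 *
      (\<Sum>(l, s, t)\<in>?small. c ((D, l), (L0, s), (K0, t)) * CD D l s t g0)"
    by (simp add: sum_distrib_left case_prod_beta)
  finally show ?thesis .
qed

lemma expansion_block_of:
  assumes f: "expansion C_S (cell_idx \<Lambda>_S M_S) c f"
    and L: "L \<in> Lclasses D" and K: "K \<in> Lclasses D"
  shows "expansion (CD D) (cell_idx (\<Lambda>D D) (MD D))
    (\<lambda>(l, s, t). if (l, s, t) \<in> cell_idx (\<Lambda>D D) (MD D) then c ((D, l), (L, s), (K, t)) else 0)
    (block_of D L K f)"
  unfolding expansion_def
proof (intro conjI allI impI ext)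
  fix i assume "i \<notin> cell_idx (\<Lambda>D D) (MD D)"
  then show "(case i of (l, s, t) \<Rightarrow> if (l, s, t) \<in> cell_idx (\<Lambda>D D) (MD D) then c ((D, l), (L, s), (K, t)) else 0) = 0"
    by (auto split: prod.splits)
next
  fix g
  let ?small = "cell_idx (\<Lambda>D D) (MD D)"
  let ?c = "\<lambda>(l, s, t). if (l, s, t) \<in> ?small then c ((D, l), (L, s), (K, t)) else 0"
  have c_eq: "(\<Sum>(l, s, t)\<in>?small. ?c (l, s, t) * CD D l s t g) =
      (\<Sum>(l, s, t)\<in>?small. c ((D, l), (L, s), (K, t)) * CD D l s t g)"
    by (intro sum.cong refl) (auto split: prod.splits)
  show "block_of D L K f g = (\<Sum>(l, s, t)\<in>?small. ?c (l, s, t) * CD D l s t g)"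
  proof (cases "g \<in> Gc D")
    case True
    have "f (sandwich L g K) = sandwich_unit D L g K *
        (\<Sum>(l, s, t)\<in>?small. c ((D, l), (L, s), (K, t)) * CD D l s t g)"
      using f sum_C_S_sandwich[OF L K True, of c] unfolding expansion_def by simp
    then have "block_of D L K f g = (sandwich_unit D L g K * unit_inverse (sandwich_unit D L g K)) *
        (\<Sum>(l, s, t)\<in>?small. c ((D, l), (L, s), (K, t)) * CD D l s t g)"
      using True by (simp add: block_of_def mult_ac)
    then show ?thesis
      using unit_inverse_right[OF sandwich_unit_dvd_1[OF L K True]] c_eq by simp
  next
    case False
    have "CD D l s t g = 0" if "(l, s, t) \<in> ?small" for l s t
      using cellular_tvec[OF G_cellular[OF D]] that False by (auto simp: tvec_def cell_idx_def)
    then show ?thesis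
      using False c_eq by (simp add: block_of_def sum.neutral case_prod_beta)
  qed
qed

end

lemma block_of_tvec: "block_of D L K f \<in> tvec (Gc D)"
  by (simp add: block_of_def tvec_def)

definition coeffs_S :: "('a \<Rightarrow> 'r) \<Rightarrow> ('a set \<times> 'l) \<times> ('a set \<times> 'm) \<times> ('a set \<times> 'm) \<Rightarrow> 'r" where
  "coeffs_S f i = (if i \<in> cell_idx \<Lambda>_S M_S then (case i of ((D, l), (L, s), (K, t)) \<Rightarrow>
     the_expansion (CD D) (cell_idx (\<Lambda>D D) (MD D)) (block_of D L K f) (l, s, t)) else 0)"

lemma expansion_block_of_coeffs_S:
  assumes "D \<in> Dclasses"
  shows "expansion (CD D) (cell_idx (\<Lambda>D D) (MD D)) (the_expansion (CD D) (cell_idx (\<Lambda>D D) (MD D))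
    (block_of D L K f)) (block_of D L K f)"
  using cellular_expansion[OF G_cellular[OF assms] block_of_tvec] by (rule expansion_the_expansion)

lemma expansion_coeffs_S: "expansion C_S (cell_idx \<Lambda>_S M_S) (coeffs_S f) f"
  unfolding expansion_def
proof (intro conjI allI impI ext)
  show "coeffs_S f i = 0" if "i \<notin> cell_idx \<Lambda>_S M_S" for i
    using that by (simp add: coeffs_S_def)
next
  fix z :: 'a
  define D where "D = {y. greenD z y}"
  have D: "D \<in> Dclasses" and "z \<in> D"
    by (simp_all add: D_def Dclass_in_Dclasses)
  then obtain L g K where L: "L \<in> Lclasses D" and g: "g \<in> Gc D" and K: "K \<in> Lclasses D"
    and z: "z = sandwich L g K"
    by (rule sandwich_surj)
  let ?small = "cell_idx (\<Lambda>D D) (MD D)"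
  have "(\<Sum>(l, s, t)\<in>cell_idx \<Lambda>_S M_S. coeffs_S f (l, s, t) * C_S l s t z) =
      sandwich_unit D L g K * (\<Sum>(l, s, t)\<in>?small. coeffs_S f ((D, l), (L, s), (K, t)) * CD D l s t g)"
    unfolding z by (rule sum_C_S_sandwich[OF D L K g])
  also have "(\<Sum>(l, s, t)\<in>?small. coeffs_S f ((D, l), (L, s), (K, t)) * CD D l s t g) =
      (\<Sum>(l, s, t)\<in>?small. the_expansion (CD D) ?small (block_of D L K f) (l, s, t) * CD D l s t g)"
    using D L K by (intro sum.cong refl) (auto simp: coeffs_S_def mem_cell_idx \<Lambda>_S_def M_S_def)
  also have "\<dots> = block_of D L K f g"
    using expansion_block_of_coeffs_S[OF D, of L K f] unfolding expansion_def by metis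
  also have "\<dots> = f z * unit_inverse (sandwich_unit D L g K)"
    using g by (simp add: block_of_def z)
  finally show "f z = (\<Sum>(l, s, t)\<in>cell_idx \<Lambda>_S M_S. coeffs_S f (l, s, t) * C_S l s t z)"
    using unit_inverse_right[OF sandwich_unit_dvd_1[OF D L K g]] by (simp add: mult_ac)
qed

lemma expansion_C_S_unique:
  assumes c: "expansion C_S (cell_idx \<Lambda>_S M_S) c f"
  shows "c = coeffs_S f"
proof
  fix i
  show "c i = coeffs_S f i"
  proof (cases "i \<in> cell_idx \<Lambda>_S M_S")
    case False
    then have "c i = 0"
      using c unfolding expansion_def by blast
    with False show ?thesis
      by (simp add: coeffs_S_def)
  next
    case True
    obtain D l L s K t where i: "i = ((D, l), (L, s), (K, t))"
      by (metis prod.collapse)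
    have mem: "D \<in> Dclasses" "L \<in> Lclasses D" "K \<in> Lclasses D" "(l, s, t) \<in> cell_idx (\<Lambda>D D) (MD D)"
      using True i by (auto simp: mem_cell_idx \<Lambda>_S_def M_S_def)
    have "the_expansion (CD D) (cell_idx (\<Lambda>D D) (MD D)) (block_of D L K f) =
        (\<lambda>(l, s, t). if (l, s, t) \<in> cell_idx (\<Lambda>D D) (MD D) then c ((D, l), (L, s), (K, t)) else 0)"
      using the_expansion_unique[OF cellular_expansion[OF G_cellular block_of_tvec]
          expansion_block_of[OF _ c]] mem by blast
    then show ?thesis
      using True i mem(4) by (simp add: coeffs_S_def)
  qed
qed

lemma C_S_expansion: "\<exists>!c. expansion C_S (cell_idx \<Lambda>_S M_S) c f"
  using expansion_coeffs_S expansion_C_S_unique by blast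

lemma expansion_supported_in_Dclass:
  assumes D': "D' \<in> Dclasses" and f: "\<forall>z. z \<notin> D' \<longrightarrow> f z = 0"
    and c: "expansion C_S (cell_idx \<Lambda>_S M_S) c f"
  shows "f = (\<lambda>z. \<Sum>i\<in>{i \<in> cell_idx \<Lambda>_S M_S. fst (fst i) = D'}.
    c i * (case i of (l, s, t) \<Rightarrow> C_S l s t z))"
proof
  fix z
  let ?C = "\<lambda>i. case i of (l, s, t) \<Rightarrow> C_S l s t z"
  have vanish: "?C i = 0" if "i \<in> cell_idx \<Lambda>_S M_S" "z \<notin> fst (fst i)" for i
  proof -
    obtain D l L s K t where i: "i = ((D, l), (L, s), (K, t))"
      by (metis prod.collapse)
    then have "D \<in> Dclasses" "L \<in> Lclasses D" "K \<in> Lclasses D"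
      using that(1) by (auto simp: mem_cell_idx \<Lambda>_S_def M_S_def)
    then show ?thesis
      using block_embed_outside that(2) i by simp
  qed
  have "f z = (\<Sum>i\<in>cell_idx \<Lambda>_S M_S. c i * ?C i)"
    using c unfolding expansion_def by (simp add: case_prod_beta)
  also have "\<dots> = (\<Sum>i\<in>{i \<in> cell_idx \<Lambda>_S M_S. fst (fst i) = D'}. c i * ?C i)"
  proof (cases "z \<in> D'")
    case True
    show ?thesis
    proof (rule sum.mono_neutral_right[OF finite_cell_idx_S])
      show "\<forall>i\<in>cell_idx \<Lambda>_S M_S - {i \<in> cell_idx \<Lambda>_S M_S. fst (fst i) = D'}. c i * ?C i = 0"
      proof
        fix i assume i: "i \<in> cell_idx \<Lambda>_S M_S - {i \<in> cell_idx \<Lambda>_S M_S. fst (fst i) = D'}"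
        then have "fst (fst i) \<in> Dclasses"
          by (auto simp: cell_idx_def \<Lambda>_S_def)
        then have "z \<notin> fst (fst i)"
          using i True Dclasses_disjoint[OF _ D'] by blast
        then show "c i * ?C i = 0"
          using vanish i by simp
      qed
    qed blast
  next
    case False
    then show ?thesis
      using f vanish \<open>f z = _\<close> by (simp add: sum.neutral)
  qed
  finally show "f z = (\<Sum>i\<in>{i \<in> cell_idx \<Lambda>_S M_S. fst (fst i) = D'}. c i * ?C i)" .
qed

lemma lower_span_if_supported_below:
  assumes D: "D \<in> Dclasses" and D': "D' \<in> Dclasses" and less: "lessDcl D' D"
    and f: "\<forall>z. z \<notin> D' \<longrightarrow> f z = 0"
  shows "f \<in> cspan C_S (lower_idx (D, lam))"
proof -
  obtain c where c: "expansion C_S (cell_idx \<Lambda>_S M_S) c f"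
    using C_S_expansion by blast
  let ?I = "{i \<in> cell_idx \<Lambda>_S M_S. fst (fst i) = D'}"
  have "?I \<subseteq> lower_idx (D, lam)"
    using less by (auto simp: lower_idx_def le_S_def lessDcl_def)
  then have "(\<lambda>z. \<Sum>i\<in>?I. c i * (case i of (l, s, t) \<Rightarrow> C_S l s t z)) \<in> cspan C_S (lower_idx (D, lam))"
    by (intro cspan_lincomb finite_lower_idx)
      (auto intro: finite_subset[OF _ finite_cell_idx_S] cspan_basis[OF finite_lower_idx])
  then show ?thesis
    using expansion_supported_in_Dclass[OF D' f c] by simp
qed

context
  fixes D :: "'a set"
  assumes D: "D \<in> Dclasses"
begin

lemma sandwich_unit_st:
  assumes L: "L \<in> Lclasses D" and K: "K \<in> Lclasses D" and h: "h \<in> Gc D"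
  shows "sandwich_unit D L (st h) K = sandwich_unit D K h L"
proof -
  have h': "h \<in> Lc D" "st h \<in> Gc D"
    using h st_mem_Gc[OF D h] mem_Gc_iff[OF D] by auto
  have "\<beta> D h (u L) = \<beta> D (st (u L)) (st h)"
    using beta_sym[OF D h'(1) u_mem_Rc[OF D L]] .
  moreover have "\<beta> D (st (u L) * st h) (u K) = \<beta> D (st (u K)) (h * u L)"
    using beta_sym[OF D Lc_mult_Gc[OF D st_u_mem_Lc[OF D L] h'(2)] u_mem_Rc[OF D K]]
    by (simp add: st_mult)
  moreover have "\<beta> D (st (u K)) h * \<beta> D (st (u K) * h) (u L) =
      \<beta> D (st (u K)) (h * u L) * \<beta> D h (u L)"
    using beta_cocycle[OF D st_u_mem_Lc[OF D K] h u_mem_Rc[OF D L]] .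
  ultimately show ?thesis
    unfolding sandwich_unit_def by (simp add: mult_ac)
qed

lemma tstar_block_embed:
  assumes L: "L \<in> Lclasses D" and K: "K \<in> Lclasses D"
  shows "tstar st UNIV (block_embed D L K F) = block_embed D K L (tstar st (Gc D) F)"
proof
  fix z
  have "tstar st UNIV (block_embed D L K F) z =
      (\<Sum>g\<in>Gc D. F g * (if sandwich L g K = st z then sandwich_unit D L g K else 0))"
    by (simp add: tstar_def block_embed_eq)
  also have "\<dots> = (\<Sum>h\<in>Gc D. F (st h) * (if sandwich L (st h) K = st z then sandwich_unit D L (st h) K else 0))"
    using sum_reindex_st[of "\<lambda>g. F g * (if sandwich L g K = st z then sandwich_unit D L g K else 0)" "Gc D"]
    by (simp add: image_st_Gc[OF D])
  also have "\<dots> = (\<Sum>h\<in>Gc D. tstar st (Gc D) F h * (if sandwich K h L = z then sandwich_unit D K h L else 0))"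
  proof (rule sum.cong[OF refl])
    fix h assume h: "h \<in> Gc D"
    have "sandwich L (st h) K = st z \<longleftrightarrow> sandwich K h L = z"
      using st_eq_iff[of "sandwich K h L" z] by (simp add: st_mult mult.assoc)
    then show "F (st h) * (if sandwich L (st h) K = st z then sandwich_unit D L (st h) K else 0) =
        tstar st (Gc D) F h * (if sandwich K h L = z then sandwich_unit D K h L else 0)"
      using h sandwich_unit_st[OF L K h] by (simp add: tstar_def)
  qed
  also have "\<dots> = block_embed D K L (tstar st (Gc D) F) z"
    by (simp add: block_embed_eq)
  finally show "tstar st UNIV (block_embed D L K F) z = block_embed D K L (tstar st (Gc D) F) z" .
qed

lemma Dclass_mult_sandwich_less:
  assumes L: "L \<in> Lclasses D" and K: "K \<in> Lclasses D" and g: "g \<in> Gc D"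
    and not_Lc: "x * st (u L) \<notin> Lc D"
  shows "lessDcl {y. greenD (x * sandwich L g K) y} D"
proof -
  let ?p = "x * sandwich L g K" and ?v = "x * st (u L)"
  have v_one: "?v * one D = ?v"
    using st_u_mem_Lc[OF D L] mem_Lc_iff[OF D] by (simp add: mult.assoc)
  have "?p = ?v * one D * (g * u K)"
    using v_one by (simp add: mult.assoc)
  then have "leJ ?p (one D)"
    unfolding leJ_def by blast
  then have "leDcl {y. greenD ?p y} D"
    unfolding leDcl_def using one_mem[OF D] greenD_refl by blast
  moreover have "{y. greenD ?p y} \<noteq> D"
  proof
    assume "{y. greenD ?p y} = D"
    then have "greenD (one D) ?p"
      using one_mem[OF D] greenD_sym by blast
    then have "leJ (one D) ?p"
      by (rule greenD_imp_leJ)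
    moreover have "leJ ?p ?v"
      using leJ_mult_left[of ?v "g * u K"] by (simp add: mult.assoc)
    ultimately have "leJ (one D) ?v"
      by (rule leJ_trans)
    moreover have "leL ?v (one D)"
      using v_one leL_idempotent_iff[OF one_idem[OF D]] by blast
    ultimately have "greenL (one D) ?v"
      using leL_stable unfolding greenL_def by blast
    then show False
      using not_Lc by (simp add: LD_def)
  qed
  ultimately show ?thesis
    unfolding lessDcl_def by blast
qed

lemma alpha_sandwich_unit:
  assumes L: "L \<in> Lclasses D" and K: "K \<in> Lclasses D" and L': "L' \<in> Lclasses D"
    and g: "g \<in> Gc D" and h: "h \<in> Gc D" and v: "x * st (u L) = st (u L') * h"
  shows "\<alpha> x (sandwich L g K) * sandwich_unit D L g K =
    (\<alpha> x (st (u L)) * unit_inverse (\<beta> D (st (u L')) h)) * (\<beta> D h g * sandwich_unit D L' (h * g) K)"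
proof -
  have uL: "st (u L) \<in> Lc D" and uL': "st (u L') \<in> Lc D" and uK: "u K \<in> st ` Lc D"
    using st_u_mem_Lc[OF D L] st_u_mem_Lc[OF D L'] u_mem_Rc[OF D K] .
  have g': "g \<in> st ` Lc D" and h': "h \<in> st ` Lc D"
    using g h mem_Gc_iff[OF D] by auto
  have vL: "x * st (u L) \<in> Lc D"
    using v Lc_mult_Gc[OF D uL' h] by simp
  have c1: "\<alpha> x (st (u L) * g) * \<beta> D (x * (st (u L) * g)) (u K) =
      \<alpha> x (sandwich L g K) * \<beta> D (st (u L) * g) (u K)"
    using alpha_beta_compat[OF D _ Lc_mult_Gc[OF D uL g] uK] Lc_mult_Gc[OF D vL g]
    by (simp add: mult.assoc)
  have c2: "\<alpha> x (st (u L)) * \<beta> D (x * st (u L)) g = \<alpha> x (st (u L) * g) * \<beta> D (st (u L)) g"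
    using alpha_beta_compat[OF D vL uL g'] .
  have c3: "\<beta> D (st (u L')) h * \<beta> D (st (u L') * h) g = \<beta> D (st (u L')) (h * g) * \<beta> D h g"
    using beta_cocycle[OF D uL' h g'] .
  have inv: "unit_inverse (\<beta> D (st (u L')) h) * \<beta> D (st (u L')) h = 1"
    using unit_inverse_right[OF beta_unit[OF D uL' h']] by (simp add: mult.commute)
  have c4: "\<beta> D (x * st (u L)) g =
      unit_inverse (\<beta> D (st (u L')) h) * (\<beta> D (st (u L')) (h * g) * \<beta> D h g)"
    using c3 inv v by (metis mult.assoc mult_1_left)
  have vg: "x * (st (u L) * g) = st (u L') * (h * g)"
    using v by (simp flip: mult.assoc)
  have "\<alpha> x (sandwich L g K) * sandwich_unit D L g K =
      \<alpha> x (sandwich L g K) * \<beta> D (st (u L) * g) (u K) * \<beta> D (st (u L)) g"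
    by (simp add: sandwich_unit_def mult_ac)
  also have "\<dots> = \<alpha> x (st (u L)) * \<beta> D (x * st (u L)) g * \<beta> D (x * (st (u L) * g)) (u K)"
    using c1 c2 by (simp add: mult_ac)
  also have "\<dots> = \<alpha> x (st (u L)) * (unit_inverse (\<beta> D (st (u L')) h) *
      (\<beta> D (st (u L')) (h * g) * \<beta> D h g)) * \<beta> D (st (u L') * (h * g)) (u K)"
    by (simp only: c4 vg)
  also have "\<dots> = (\<alpha> x (st (u L)) * unit_inverse (\<beta> D (st (u L')) h)) *
      (\<beta> D h g * sandwich_unit D L' (h * g) K)"
    by (simp add: sandwich_unit_def mult_ac)
  finally show ?thesis .
qed

lemma block_embed_tmult_tbasis:
  assumes h: "h \<in> Gc D"
  shows "block_embed D L K (tmult (\<beta> D) (Gc D) (tbasis h) F) z = (\<Sum>g\<in>Gc D.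
    \<beta> D h g * F g * (if sandwich L (h * g) K = z then sandwich_unit D L (h * g) K else 0))"
proof -
  let ?G = "\<lambda>g y. \<beta> D h g * F g * (if sandwich L y K = z then sandwich_unit D L y K else 0)"
  have "block_embed D L K (tmult (\<beta> D) (Gc D) (tbasis h) F) z =
      (\<Sum>y\<in>Gc D. \<Sum>g\<in>Gc D. if h * g = y then ?G g y else 0)"
    unfolding block_embed_eq tmult_tbasis_left[OF finite h] sum_distrib_right
    by (intro sum.cong refl) (simp split: if_split)
  also have "\<dots> = (\<Sum>g\<in>Gc D. ?G g (h * g))"
    using Gc_mult[OF D h] by (subst sum.swap) simp
  finally show ?thesis .
qed

lemma tbasis_mult_block_embed_Lc:
  assumes L: "L \<in> Lclasses D" and K: "K \<in> Lclasses D" and L': "L' \<in> Lclasses D"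
    and h: "h \<in> Gc D" and v: "x * st (u L) = st (u L') * h"
  shows "tmult \<alpha> UNIV (tbasis x) (block_embed D L K F) z =
    (\<alpha> x (st (u L)) * unit_inverse (\<beta> D (st (u L')) h)) *
      block_embed D L' K (tmult (\<beta> D) (Gc D) (tbasis h) F) z"
proof -
  let ?k = "\<alpha> x (st (u L)) * unit_inverse (\<beta> D (st (u L')) h)"
  have "(if x * sandwich L g K = z then \<alpha> x (sandwich L g K) * sandwich_unit D L g K else 0) =
      ?k * (\<beta> D h g * (if sandwich L' (h * g) K = z then sandwich_unit D L' (h * g) K else 0))"
    if g: "g \<in> Gc D" for g
  proof -
    have "x * sandwich L g K = sandwich L' (h * g) K"
      using v by (simp flip: mult.assoc)
    then show ?thesis
      using alpha_sandwich_unit[OF L K L' g h v] by simp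
  qed
  then show ?thesis
    unfolding tbasis_mult_block_embed block_embed_tmult_tbasis[OF h] sum_distrib_left
    by (intro sum.cong refl) (simp add: mult_ac)
qed

lemma tbasis_mult_C_S_not_Lc:
  assumes lam: "lam \<in> \<Lambda>D D" and L: "L \<in> Lclasses D" and t: "t \<in> M_S (D, lam)"
    and not_Lc: "x * st (u L) \<notin> Lc D"
  shows "tmult \<alpha> UNIV (tbasis x) (C_S (D, lam) (L, s) t) \<in> cspan C_S (lower_idx (D, lam))"
proof -
  obtain K t' where t_eq: "t = (K, t')" and K: "K \<in> Lclasses D"
    using t by (auto simp: M_S_def)
  let ?c = "\<lambda>g. CD D lam s t' g * (\<alpha> x (sandwich L g K) * sandwich_unit D L g K)"
  have "tmult \<alpha> UNIV (tbasis x) (C_S (D, lam) (L, s) t) =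
      (\<lambda>z. \<Sum>g\<in>Gc D. ?c g * tbasis (x * sandwich L g K) z)"
    by (intro ext) (auto simp: t_eq tbasis_mult_block_embed tbasis_def intro: sum.cong)
  also have "\<dots> \<in> cspan C_S (lower_idx (D, lam))"
  proof (intro cspan_lincomb finite_lower_idx finite)
    fix g assume g: "g \<in> Gc D"
    let ?p = "x * sandwich L g K"
    show "tbasis ?p \<in> cspan C_S (lower_idx (D, lam))"
      using lower_span_if_supported_below[OF D Dclass_in_Dclasses
          Dclass_mult_sandwich_less[OF L K g not_Lc]]
      by (simp add: tbasis_def)
  qed
  finally show ?thesis .
qed

lemma tbasis_mult_C_S_Lc:
  assumes L: "L \<in> Lclasses D" and K: "K \<in> Lclasses D" and L': "L' \<in> Lclasses D"
    and h: "h \<in> Gc D" and v: "x * st (u L) = st (u L') * h"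
  shows "tmult \<alpha> UNIV (tbasis x) (C_S (D, lam) (L, s) (K, t)) z -
      (\<Sum>p\<in>M_S (D, lam). (if fst p = L' then \<alpha> x (st (u L)) * unit_inverse (\<beta> D (st (u L')) h) * r (snd p)
        else 0) * C_S (D, lam) p (K, t) z) =
    \<alpha> x (st (u L)) * unit_inverse (\<beta> D (st (u L')) h) *
      block_embed D L' K (\<lambda>y. tmult (\<beta> D) (Gc D) (tbasis h) (CD D lam s t) y -
        (\<Sum>s'\<in>MD D lam. r s' * CD D lam s' t y)) z"
proof -
  let ?k = "\<alpha> x (st (u L)) * unit_inverse (\<beta> D (st (u L')) h)"
  have "(\<Sum>p\<in>M_S (D, lam). (if fst p = L' then ?k * r (snd p) else 0) * C_S (D, lam) p (K, t) z) =
      ?k * (\<Sum>s'\<in>MD D lam. r s' * block_embed D L' K (CD D lam s' t) z)"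
    using sum_Times_if_fst[of "Lclasses D" L' "\<lambda>b. ?k * r b" "\<lambda>p. C_S (D, lam) p (K, t) z"] L'
    by (simp add: M_S_def sum_distrib_left mult.assoc split_def)
  then show ?thesis
    by (simp add: tbasis_mult_block_embed_Lc[OF L K L' h v] block_embed_diff block_embed_sum
        right_diff_distrib)
qed

lemma block_embed_lower_span:
  assumes L: "L \<in> Lclasses D" and K: "K \<in> Lclasses D"
    and F: "F \<in> cspan (CD D) {(m, s, t). (m, s, t) \<in> cell_idx (\<Lambda>D D) (MD D) \<and> leD D m lam \<and> m \<noteq> lam}"
      (is "F \<in> cspan (CD D) ?lower")
  shows "block_embed D L K F \<in> cspan C_S (lower_idx (D, lam))"
proof -
  obtain d where d: "F = (\<lambda>z. \<Sum>j\<in>?lower. d j * (case j of (m, s, t) \<Rightarrow> CD D m s t z))"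
    using F unfolding cspan_iff by blast
  have "block_embed D L K F =
      (\<lambda>z. \<Sum>j\<in>?lower. d j * (case j of (m, s, t) \<Rightarrow> C_S (D, m) (L, s) (K, t) z))"
  proof
    fix z
    show "block_embed D L K F z =
        (\<Sum>j\<in>?lower. d j * (case j of (m, s, t) \<Rightarrow> C_S (D, m) (L, s) (K, t) z))"
      unfolding d by (simp add: block_embed_sum case_prod_beta)
  qed
  also have "\<dots> \<in> cspan C_S (lower_idx (D, lam))"
  proof (intro cspan_lincomb finite_lower_idx)
    show "finite ?lower"
      by (rule finite_subset[OF _ finite_cell_idx[OF cellular_finite cellular_finite_M]])
        (use G_cellular[OF D] in auto)
    fix j assume j: "j \<in> ?lower"
    then obtain m s t where j_eq: "j = (m, s, t)"
      by (metis prod.collapse)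
    then have "((D, m), (L, s), (K, t)) \<in> lower_idx (D, lam)"
      using j D L K by (auto simp: lower_idx_def le_S_def mem_cell_idx \<Lambda>_S_def M_S_def)
    then have "C_S (D, m) (L, s) (K, t) \<in> cspan C_S (lower_idx (D, lam))"
      by (rule cspan_basis[OF finite_lower_idx])
    then show "(\<lambda>z. case j of (m, s, t) \<Rightarrow> C_S (D, m) (L, s) (K, t) z) \<in> cspan C_S (lower_idx (D, lam))"
      using j_eq by (simp del: C_S_apply)
  qed
  finally show ?thesis .
qed

lemma tbasis_mult_C_S:
  assumes lam: "lam \<in> \<Lambda>D D" and L: "L \<in> Lclasses D" and s: "s \<in> MD D lam"
  shows "\<exists>r. \<forall>t\<in>M_S (D, lam). (\<lambda>z. tmult \<alpha> UNIV (tbasis x) (C_S (D, lam) (L, s) t) z -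
    (\<Sum>s'\<in>M_S (D, lam). r s' * C_S (D, lam) s' t z)) \<in> cspan C_S (lower_idx (D, lam))"
proof (cases "x * st (u L) \<in> Lc D")
  case False
  then show ?thesis
    using tbasis_mult_C_S_not_Lc[OF lam L] by (intro exI[of _ "\<lambda>_. 0"]) simp
next
  case True
  then obtain L' h where L': "L' \<in> Lclasses D" and h: "h \<in> Gc D" and v: "x * st (u L) = st (u L') * h"
    by (rule Lc_decomp[OF D])
  let ?k = "\<alpha> x (st (u L)) * unit_inverse (\<beta> D (st (u L')) h)"
  have "tbasis h \<in> tvec (Gc D)"
    using h by (simp add: tvec_def tbasis_def)
  then obtain r where r: "\<forall>t\<in>MD D lam. (\<lambda>z. tmult (\<beta> D) (Gc D) (tbasis h) (CD D lam s t) z -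
      (\<Sum>s'\<in>MD D lam. r s' * CD D lam s' t z))
      \<in> cspan (CD D) {(m, s', t'). (m, s', t') \<in> cell_idx (\<Lambda>D D) (MD D) \<and> leD D m lam \<and> m \<noteq> lam}"
    using cellular_mult_left[OF G_cellular[OF D] lam s] by blast
  show ?thesis
  proof (intro exI[of _ "\<lambda>p. if fst p = L' then ?k * r (snd p) else 0"] ballI)
    fix t assume "t \<in> M_S (D, lam)"
    then obtain K t' where t_eq: "t = (K, t')" and K: "K \<in> Lclasses D" and t': "t' \<in> MD D lam"
      by (auto simp: M_S_def)
    show "(\<lambda>z. tmult \<alpha> UNIV (tbasis x) (C_S (D, lam) (L, s) t) z -
        (\<Sum>p\<in>M_S (D, lam). (if fst p = L' then ?k * r (snd p) else 0) * C_S (D, lam) p t z))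
      \<in> cspan C_S (lower_idx (D, lam))"
      unfolding t_eq tbasis_mult_C_S_Lc[OF L K L' h v]
      using r t' by (intro cspan_scale finite_lower_idx block_embed_lower_span[OF L' K]) blast
  qed
qed

end

lemma C_S_mult_left:
  assumes l: "l \<in> \<Lambda>_S" and s: "s \<in> M_S l"
  shows "\<exists>r. \<forall>t\<in>M_S l. (\<lambda>z. tmult \<alpha> UNIV a (C_S l s t) z - (\<Sum>s'\<in>M_S l. r s' * C_S l s' t z))
    \<in> cspan C_S (lower_idx l)"
proof -
  obtain D lam L s0 where l_eq: "l = (D, lam)" and s_eq: "s = (L, s0)" and D: "D \<in> Dclasses"
    and lam: "lam \<in> \<Lambda>D D" and L: "L \<in> Lclasses D" and s0: "s0 \<in> MD D lam"
    using l s by (auto simp: \<Lambda>_S_def M_S_def)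
  have "\<forall>x. \<exists>r. \<forall>t\<in>M_S l. (\<lambda>z. tmult \<alpha> UNIV (tbasis x) (C_S l s t) z -
      (\<Sum>s'\<in>M_S l. r s' * C_S l s' t z)) \<in> cspan C_S (lower_idx l)"
    unfolding l_eq s_eq using tbasis_mult_C_S[OF D lam L s0] by blast
  then obtain R where R: "\<forall>x. \<forall>t\<in>M_S l. (\<lambda>z. tmult \<alpha> UNIV (tbasis x) (C_S l s t) z -
      (\<Sum>s'\<in>M_S l. R x s' * C_S l s' t z)) \<in> cspan C_S (lower_idx l)"
    by (rule choice[THEN exE])
  show ?thesis
  proof (intro exI[of _ "\<lambda>s'. \<Sum>x\<in>UNIV. a x * R x s'"] ballI)
    fix t assume t: "t \<in> M_S l"
    have "(\<lambda>z. tmult \<alpha> UNIV a (C_S l s t) z - (\<Sum>s'\<in>M_S l. (\<Sum>x\<in>UNIV. a x * R x s') * C_S l s' t z)) =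
        (\<lambda>z. \<Sum>x\<in>UNIV. a x * (tmult \<alpha> UNIV (tbasis x) (C_S l s t) z - (\<Sum>s'\<in>M_S l. R x s' * C_S l s' t z)))"
    proof
      fix z
      have "(\<Sum>s'\<in>M_S l. (\<Sum>x\<in>UNIV. a x * R x s') * C_S l s' t z) =
          (\<Sum>x\<in>UNIV. a x * (\<Sum>s'\<in>M_S l. R x s' * C_S l s' t z))"
        by (simp add: sum_distrib_left sum_distrib_right mult.assoc sum.swap[of _ "M_S l"])
      then show "tmult \<alpha> UNIV a (C_S l s t) z - (\<Sum>s'\<in>M_S l. (\<Sum>x\<in>UNIV. a x * R x s') * C_S l s' t z) =
          (\<Sum>x\<in>UNIV. a x * (tmult \<alpha> UNIV (tbasis x) (C_S l s t) z - (\<Sum>s'\<in>M_S l. R x s' * C_S l s' t z)))"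
        by (simp add: tmult_eq_sum_tbasis[of UNIV] right_diff_distrib sum_subtractf)
    qed
    also have "\<dots> \<in> cspan C_S (lower_idx l)"
      using R t by (intro cspan_lincomb finite_lower_idx finite) blast
    finally show "(\<lambda>z. tmult \<alpha> UNIV a (C_S l s t) z -
        (\<Sum>s'\<in>M_S l. (\<Sum>x\<in>UNIV. a x * R x s') * C_S l s' t z)) \<in> cspan C_S (lower_idx l)" .
  qed
qed

lemma tstar_C_S:
  assumes l: "l \<in> \<Lambda>_S" and s: "s \<in> M_S l" and t: "t \<in> M_S l"
  shows "tstar st UNIV (C_S l s t) = C_S l t s"
proof -
  obtain D lam L s0 K t0 where eqs: "l = (D, lam)" "s = (L, s0)" "t = (K, t0)"
    and D: "D \<in> Dclasses" and lam: "lam \<in> \<Lambda>D D" and L: "L \<in> Lclasses D" and K: "K \<in> Lclasses D"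
    and s0: "s0 \<in> MD D lam" and t0: "t0 \<in> MD D lam"
    using l s t by (auto simp: \<Lambda>_S_def M_S_def)
  show ?thesis
    using tstar_block_embed[OF D L K] cellular_star[OF G_cellular[OF D] lam s0 t0] by (simp add: eqs)
qed

lemma partial_order_\<Lambda>_S: "partial_order_on_set \<Lambda>_S le_S"
  unfolding \<Lambda>_S_def le_S_def
proof (rule partial_order_on_set_lex)
  show "\<forall>D\<in>Dclasses. partial_order_on_set (\<Lambda>D D) (leD D)"
    using cellular_partial_order[OF G_cellular] by blast
qed (rule lessDcl_asym lessDcl_trans; assumption)+

lemma cellular_S: "cellular UNIV \<alpha> st \<Lambda>_S le_S M_S C_S"
  unfolding cellular_def
  using finite_\<Lambda>_S partial_order_\<Lambda>_S finite_M_S C_S_expansion[unfolded expansion_def]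
    alg_anti_involution_UNIV[OF A1] tstar_C_S C_S_mult_left[unfolded lower_idx_def]
  by (simp add: tvec_def)

end

theorem theorem5:
  fixes st :: "'a::{semigroup_mult, finite} \<Rightarrow> 'a"
    and \<alpha> :: "'a \<Rightarrow> 'a \<Rightarrow> 'r::comm_ring_1"
    and one :: "'a set \<Rightarrow> 'a"
    and \<beta> :: "'a set \<Rightarrow> 'a \<Rightarrow> 'a \<Rightarrow> 'r"
    and \<Lambda>D :: "'a set \<Rightarrow> 'l set"
    and leD :: "'a set \<Rightarrow> 'l \<Rightarrow> 'l \<Rightarrow> bool"
    and MD :: "'a set \<Rightarrow> 'l \<Rightarrow> 'm set"
    and CD :: "'a set \<Rightarrow> 'l \<Rightarrow> 'm \<Rightarrow> 'm \<Rightarrow> ('a \<Rightarrow> 'r)"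
    and u :: "'a set \<Rightarrow> 'a"
  assumes inv: "anti_involution st"
    and tw: "twisting \<alpha>"
    and A1: "\<forall>x y. \<alpha> x y = \<alpha> (st y) (st x)"
    and A2: "\<forall>D\<in>Dclasses. one D \<in> D \<and> one D * one D = one D \<and> st (one D) = one D"
    and A3_unit: "\<forall>D\<in>Dclasses. \<forall>x\<in>LD one D. \<forall>y\<in>st ` LD one D. \<beta> D x y dvd 1"
    and A3_cocycle: "\<forall>D\<in>Dclasses. \<forall>x y z.
        x \<in> LD one D \<and> y \<in> st ` LD one D \<and> x * y \<in> LD one D \<and> z \<in> st ` LD one D \<and>
        y * z \<in> st ` LD one D \<and> y \<in> LD one D \<longrightarrow>
        \<beta> D x y * \<beta> D (x * y) z = \<beta> D x (y * z) * \<beta> D y z"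
    and A3_compat: "\<forall>D\<in>Dclasses. \<forall>x y z.
        x * y \<in> LD one D \<and> z \<in> st ` LD one D \<and> y \<in> LD one D \<longrightarrow>
        \<alpha> x y * \<beta> D (x * y) z = \<alpha> x (y * z) * \<beta> D y z"
    and A3_sym: "\<forall>D\<in>Dclasses. \<forall>x y.
        x \<in> LD one D \<and> y \<in> st ` LD one D \<and> st y \<in> LD one D \<and> st x \<in> st ` LD one D \<longrightarrow>
        \<beta> D x y = \<beta> D (st y) (st x)"
    and A4: "\<forall>D\<in>Dclasses. cellular (GD st one D) (\<beta> D) st (\<Lambda>D D) (leD D) (MD D) (CD D)"
    and u_choice: "\<forall>D\<in>Dclasses. \<forall>L\<in>Lclasses D. u L \<in> L \<and> greenR (u L) (one D)"
  shows "cellular (UNIV :: 'a set) \<alpha> st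
     {(D, l). D \<in> Dclasses \<and> l \<in> \<Lambda>D D}
     (\<lambda>(D1, l1) (D2, l2). lessDcl D1 D2 \<or> (D1 = D2 \<and> leD D1 l1 l2))
     (\<lambda>(D, l). Lclasses D \<times> MD D l)
     (\<lambda>(D, l) (L, s) (K, t). (\<lambda>z. \<Sum>g\<in>GD st one D.
        if st (u L) * g * u K = z
        then CD D l s t g * \<beta> D (st (u L)) g * \<beta> D (st (u L) * g) (u K) else 0))"
proof -
  interpret semigroup_cell_datum st \<alpha> one \<beta> \<Lambda>D leD MD CD u
    using inv A1 A2 A3_unit A3_cocycle A3_compat A3_sym A4 u_choice by unfold_locales
  show ?thesis
    using cellular_S unfolding \<Lambda>_S_def le_S_def M_S_def C_S_def block_embed_def .
qed

end
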